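(* The complex $\mathcal{M}(\partial\Delta^2)$ is the $1$-skeleton of a triangular prism (a graph with $6$ vertices and $9$ edges), so $\mathcal{M}(\partial\Delta^2)\simeq\bigvee^4S^1$; moreover $\mathcal{M}(\Delta^2)$ collapses simplicially onto its subcomplex $\mathcal{M}(\partial\Delta^2)$, hence $\mathcal{M}(\Delta^2)\simeq\bigvee^4S^1$.
   Context: All simplicial complexes are finite abstract simplicial complexes; simplices are nonempty. $\Delta^n$ is the simplicial complex of all nonempty subsets of an $(n+1)$-element vertex set, and $\partial\Delta^n$ the subcomplex of proper nonempty subsets. The Hasse diagram $\mathcal{H}(K)$ of $K$ is the directed graph whose vertices are the simplices of $K$, with an edge $\sigma\to\tau$ whenever $\sigma\subsetneq\tau$ and $\dim\tau=\dim\sigma+1$. A matching on $\mathcal{H}(K)$ is a set $W$ of edges of $\mathcal{H}(K)$, no two sharing a vertex; an edge in $W$ is called a pair. $W$ is acyclic if the directed graph obtained from $\mathcal{H}(K)$ by reversing every edge in $W$ has no directed cycle. The complex of discrete Morse matchings $\mathcal{M}(K)$ is the simplicial complex whose vertices are the edges of $\mathcal{H}(K)$ and whose simplices are the nonempty acyclic matchings on $\mathcal{H}(K)$; $\mathcal{M}(\partial\Delta^2)$ is regarded as a subcomplex of $\mathcal{M}(\Delta^2)$ via the map sending each pair to itself. *)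

theory Defs
  imports "HOL-Analysis.Analysis"
begin

definition simplicial_complex :: "'a set set \<Rightarrow> bool" where
  "simplicial_complex K \<longleftrightarrow> finite K \<and> (\<forall>\<sigma>\<in>K. finite \<sigma> \<and> \<sigma> \<noteq> {}) \<and>
     (\<forall>\<sigma>\<in>K. \<forall>\<tau>. \<tau> \<subseteq> \<sigma> \<and> \<tau> \<noteq> {} \<longrightarrow> \<tau> \<in> K)"

definition vertices :: "'a set set \<Rightarrow> 'a set" where
  "vertices K = \<Union>K"

definition Delta2 :: "nat set set" where
  "Delta2 = {\<sigma>. \<sigma> \<subseteq> {0,1,2} \<and> \<sigma> \<noteq> {}}"

definition bdDelta2 :: "nat set set" where
  "bdDelta2 = {\<sigma>. \<sigma> \<subset> {0,1,2} \<and> \<sigma> \<noteq> {}}"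

definition hasse :: "'a set set \<Rightarrow> ('a set \<times> 'a set) set" where
  "hasse K = {(\<sigma>, \<tau>). \<sigma> \<in> K \<and> \<tau> \<in> K \<and> \<sigma> \<subset> \<tau> \<and> card \<tau> = card \<sigma> + 1}"

definition is_matching :: "('v \<times> 'v) set \<Rightarrow> bool" where
  "is_matching W \<longleftrightarrow> (\<forall>e\<in>W. \<forall>e'\<in>W. e \<noteq> e' \<longrightarrow>
      {fst e, snd e} \<inter> {fst e', snd e'} = {})"

definition acyclic_matching :: "'a set set \<Rightarrow> ('a set \<times> 'a set) set \<Rightarrow> bool" where
  "acyclic_matching K W \<longleftrightarrow> W \<subseteq> hasse K \<and> is_matching W \<and>
      acyclic ((hasse K - W) \<union> W\<inverse>)"

definition morse_complex :: "'a set set \<Rightarrow> ('a set \<times> 'a set) set set" where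
  "morse_complex K = {W. W \<noteq> {} \<and> acyclic_matching K W}"

definition simp_iso :: "'a set set \<Rightarrow> 'b set set \<Rightarrow> bool" where
  "simp_iso K L \<longleftrightarrow> (\<exists>f. bij_betw f (vertices K) (vertices L) \<and>
      (\<forall>\<sigma>. \<sigma> \<subseteq> vertices K \<longrightarrow> (\<sigma> \<in> K \<longleftrightarrow> f ` \<sigma> \<in> L)))"

text \<open>1-skeleton of the triangular prism: vertices (i,b), i in {0,1,2}, b a bool;
  edges inside each triangle and the three vertical edges.\<close>
definition prism_graph :: "(nat \<times> bool) set set" where
  "prism_graph =
     {{(i, b)} | i b. i \<in> {0,1,2}} \<union>
     {{(i, b), (j, b)} | i j b. i \<in> {0,1,2} \<and> j \<in> {0,1,2} \<and> i \<noteq> j} \<union>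
     {{(i, False), (i, True)} | i. i \<in> {0,1,2}}"

definition elementary_collapse :: "'a set set \<Rightarrow> 'a set set \<Rightarrow> bool" where
  "elementary_collapse K K' \<longleftrightarrow> (\<exists>\<sigma> \<tau>. \<sigma> \<in> K \<and> \<tau> \<in> K \<and> \<sigma> \<subset> \<tau> \<and>
      (\<forall>\<rho>\<in>K. \<sigma> \<subseteq> \<rho> \<longrightarrow> \<rho> = \<sigma> \<or> \<rho> = \<tau>) \<and> K' = K - {\<sigma>, \<tau>})"

definition collapses_to :: "'a set set \<Rightarrow> 'a set set \<Rightarrow> bool" where
  "collapses_to K L \<longleftrightarrow> (K, L) \<in> {(A, B). elementary_collapse A B}\<^sup>*"

text \<open>Points are barycentric coordinate functions supported on a simplex;
  topology is the subspace topology of the product topology on 'a => real.\<close>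
definition realization :: "'a set set \<Rightarrow> ('a \<Rightarrow> real) topology" where
  "realization K = subtopology (powertop_real UNIV)
     {f. (\<forall>v. 0 \<le> f v) \<and> (\<exists>\<sigma>\<in>K. {v. f v \<noteq> 0} \<subseteq> \<sigma> \<and> sum f \<sigma> = 1)}"

text \<open>Wedge of n circles: circles in the plane with centres k and radii k,
  k = 1..n, pairwise meeting exactly at 0.\<close>
definition wedge_circles :: "nat \<Rightarrow> complex topology" where
  "wedge_circles n = top_of_set {z. \<exists>k\<in>{1..n}. cmod (z - of_nat k) = real k}"

end

theory Submission
  imports Defs
begin

text \<open>
  The Hasse diagram of \<open>\<partial>\<Delta>\<^sup>2\<close> is a hexagon, and \<open>\<Delta>\<^sup>2\<close> adds the three edges from the
  sides to the 2-face. A set of Hasse edges is a matching iff no two of them share a simplex,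
  and a matching fails to be acyclic iff it contains every other edge of the hexagon, because
  then it reverses half of the hexagon into a directed cycle. Acyclicity of the remaining
  matchings is certified by discrete Morse functions, and it passes to subsets, since removing a
  pair cannot create a cycle. Hence \<open>M(\<partial>\<Delta>\<^sup>2)\<close> is the complement of the hexagon, i.e. the
  prism graph, while \<open>M(\<Delta>\<^sup>2)\<close> adds three cones of triangles that twelve elementary collapses
  remove again.

  A collapse across a free face is a deformation retraction of geometric realizations, and so
  is an expansion up to homotopy. Edge slides and subdivisions deform the prism graph into four
  triangles with a common vertex, and radial projection maps this bouquet homeomorphically onto
  the wedge of four circles.
\<close>

section \<open>Geometric realizations and collapses across a free face\<close>

definition realization_points :: "'a set set \<Rightarrow> ('a \<Rightarrow> real) set" where
  "realization_points K =
     {f. (\<forall>v. 0 \<le> f v) \<and> (\<exists>\<sigma>\<in>K. {v. f v \<noteq> 0} \<subseteq> \<sigma> \<and> sum f \<sigma> = 1)}"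

lemma realization_eq_subtopology:
  "realization K = subtopology (powertop_real UNIV) (realization_points K)"
  unfolding realization_def realization_points_def ..

lemma topspace_realization [simp]: "topspace (realization K) = realization_points K"
  by (simp add: realization_eq_subtopology)

lemma realization_points_mono: "K' \<subseteq> K \<Longrightarrow> realization_points K' \<subseteq> realization_points K"
  unfolding realization_points_def by blast

lemma realization_pointsE:
  assumes "x \<in> realization_points K"
  obtains \<rho> where "\<forall>v. 0 \<le> x v" "\<rho> \<in> K" "{v. x v \<noteq> 0} \<subseteq> \<rho>" "finite \<rho>" "sum x \<rho> = 1"
proof -
  obtain \<rho> where \<rho>: "\<forall>v. 0 \<le> x v" "\<rho> \<in> K" "{v. x v \<noteq> 0} \<subseteq> \<rho>" "sum x \<rho> = 1"
    using assms unfolding realization_points_def by blast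
  moreover have "finite \<rho>"
    using \<rho>(4) sum.infinite by fastforce
  ultimately show thesis
    using that by blast
qed

lemma realization_points_support: "x \<in> realization_points K \<Longrightarrow> x v \<noteq> 0 \<Longrightarrow> v \<in> \<Union>K"
  by (auto elim!: realization_pointsE)

lemma realization_pointsI:
  "\<lbrakk>\<forall>v. 0 \<le> x v; \<rho> \<in> K; {v. x v \<noteq> 0} \<subseteq> \<rho>; sum x \<rho> = 1\<rbrakk> \<Longrightarrow> x \<in> realization_points K"
  unfolding realization_points_def by blast

lemma sum_eq_if_support_subset:
  assumes "{v. f v \<noteq> 0} \<subseteq> A" "{v. f v \<noteq> 0} \<subseteq> B" "finite A" "finite B"
  shows "sum f A = sum f B"
proof -
  have "sum f A = sum f (A \<inter> B)"
    by (rule sum.mono_neutral_right) (use assms in auto)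
  also have "\<dots> = sum f B"
    by (rule sum.mono_neutral_left) (use assms in auto)
  finally show ?thesis .
qed

lemma realization_points_sum:
  assumes "x \<in> realization_points K" "finite A" "{v. x v \<noteq> 0} \<subseteq> A"
  shows "sum x A = 1"
  using assms by (metis realization_pointsE sum_eq_if_support_subset)

lemma continuous_map_realization_coordinate:
  "continuous_map (realization K) euclideanreal (\<lambda>x. x v)"
  unfolding realization_eq_subtopology
  by (rule continuous_map_from_subtopology)
    (use continuous_map_product_projection[of v UNIV "\<lambda>_. euclideanreal"] in simp)

lemma continuous_map_into_realization:
  assumes "\<And>v. continuous_map X euclideanreal (\<lambda>x. f x v)"
    and "\<And>x. x \<in> topspace X \<Longrightarrow> f x \<in> realization_points K"
  shows "continuous_map X (realization K) f"
  unfolding realization_eq_subtopology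
  using assms by (auto intro!: continuous_map_into_subtopology simp: continuous_map_componentwise_UNIV)

lemma continuous_map_Min:
  assumes "finite A" "A \<noteq> {}" "\<And>v. v \<in> A \<Longrightarrow> continuous_map X euclideanreal (f v)"
  shows "continuous_map X euclideanreal (\<lambda>x. Min ((\<lambda>v. f v x) ` A))"
  using assms
proof (induction A rule: finite_ne_induct)
  case (singleton a)
  then show ?case by simp
next
  case (insert a A)
  have "(\<lambda>x. Min ((\<lambda>v. f v x) ` insert a A)) = (\<lambda>x. min (f a x) (Min ((\<lambda>v. f v x) ` A)))"
    using insert by (auto simp: Min_insert)
  then show ?case
    using insert by (auto intro!: continuous_map_real_min)
qed

text \<open>\<open>K\<close> is not assumed to be closed under faces, so the facets of \<open>insert c \<sigma>\<close> other
  than \<open>\<sigma>\<close> are required to be present explicitly.\<close>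

locale free_face =
  fixes K :: "'a set set" and \<sigma> :: "'a set" and c :: 'a
  assumes face_in: "\<sigma> \<in> K" and coface_in: "insert c \<sigma> \<in> K" and apex_notin: "c \<notin> \<sigma>"
    and finite_face: "finite \<sigma>" and face_nonempty: "\<sigma> \<noteq> {}"
    and free: "\<forall>\<rho>\<in>K. \<sigma> \<subseteq> \<rho> \<longrightarrow> \<rho> \<subseteq> insert c \<sigma>"
    and facets_in: "\<forall>v\<in>\<sigma>. insert c \<sigma> - {v} \<in> K"
begin

definition min_coord :: "('a \<Rightarrow> real) \<Rightarrow> real" where
  "min_coord x = Min (x ` \<sigma>)"

text \<open>The collapse retraction moves the mass \<open>min_coord x\<close> from every vertex of \<open>\<sigma>\<close>
  onto the apex \<open>c\<close>; this kills one coordinate of \<open>\<sigma>\<close> and so pushes \<open>x\<close> off the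
  free face \<open>\<sigma>\<close> and the open simplex \<open>insert c \<sigma>\<close>.\<close>

definition push :: "('a \<Rightarrow> real) \<Rightarrow> 'a \<Rightarrow> real" where
  "push x v = (if v \<in> \<sigma> then x v - min_coord x
     else if v = c then x c + real (card \<sigma>) * min_coord x else x v)"

lemma min_coord_le: "v \<in> \<sigma> \<Longrightarrow> min_coord x \<le> x v"
  unfolding min_coord_def using finite_face by simp

lemma min_coord_attained: obtains v where "v \<in> \<sigma>" "x v = min_coord x"
proof -
  have "Min (x ` \<sigma>) \<in> x ` \<sigma>"
    using finite_face face_nonempty by simp
  then show thesis
    using that unfolding min_coord_def by force
qed

lemma min_coord_nonneg:
  assumes "x \<in> realization_points K"
  shows "0 \<le> min_coord x"
proof -
  obtain v where "v \<in> \<sigma>" "x v = min_coord x"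
    by (rule min_coord_attained)
  moreover have "0 \<le> x v"
    using assms by (auto elim: realization_pointsE)
  ultimately show ?thesis
    by simp
qed

lemma push_nonneg: "x \<in> realization_points K \<Longrightarrow> 0 \<le> push x v"
  using min_coord_le[of v x] min_coord_nonneg[of x]
  by (auto simp: push_def elim!: realization_pointsE)

lemma sum_push: "sum (push x) (insert c \<sigma>) = sum x (insert c \<sigma>)"
proof -
  have "sum (push x) \<sigma> = sum x \<sigma> - real (card \<sigma>) * min_coord x"
    by (simp add: push_def sum_subtractf)
  then show ?thesis
    using apex_notin finite_face by (simp add: push_def)
qed

lemma push_eq_self: "min_coord x = 0 \<Longrightarrow> push x = x"
  by (auto simp: push_def)

lemma facet_in_collapsed: "v \<in> \<sigma> \<Longrightarrow> insert c \<sigma> - {v} \<in> K - {\<sigma>, insert c \<sigma>}"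
  using facets_in apex_notin by auto

lemma support_if_min_coord_pos:
  assumes x: "x \<in> realization_points K" and pos: "0 < min_coord x"
  shows "{v. x v \<noteq> 0} \<subseteq> insert c \<sigma>"
proof -
  obtain \<rho> where \<rho>: "\<rho> \<in> K" "{v. x v \<noteq> 0} \<subseteq> \<rho>"
    using x by (rule realization_pointsE)
  have "\<sigma> \<subseteq> {v. x v \<noteq> 0}"
    using min_coord_le[of _ x] pos by force
  then show ?thesis
    using free \<rho> by blast
qed

lemma collapsed_if_min_coord_zero:
  assumes x: "x \<in> realization_points K" and zero: "min_coord x = 0"
  shows "x \<in> realization_points (K - {\<sigma>, insert c \<sigma>})"
proof -
  obtain \<rho> where nn: "\<forall>v. 0 \<le> x v" and \<rho>: "\<rho> \<in> K" "{v. x v \<noteq> 0} \<subseteq> \<rho>" "sum x \<rho> = 1"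
    using x by (rule realization_pointsE)
  show ?thesis
  proof (cases "\<rho> \<in> {\<sigma>, insert c \<sigma>}")
    case False
    then show ?thesis
      using \<rho> nn by (intro realization_pointsI[where \<rho> = \<rho>]) auto
  next
    case True
    obtain v where v: "v \<in> \<sigma>" "x v = 0"
      using zero by (metis min_coord_attained)
    have supp: "{v. x v \<noteq> 0} \<subseteq> insert c \<sigma> - {v}"
      using True \<rho>(2) v by auto
    show ?thesis
      using facet_in_collapsed[OF v(1)] realization_points_sum[OF x _ supp] finite_face nn supp
      by (auto intro: realization_pointsI)
  qed
qed

lemma push_in_collapsed:
  assumes x: "x \<in> realization_points K"
  shows "push x \<in> realization_points (K - {\<sigma>, insert c \<sigma>})"
proof (cases "min_coord x = 0")
  case True
  then show ?thesis
    using x by (simp add: push_eq_self collapsed_if_min_coord_zero)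
next
  case False
  then have pos: "0 < min_coord x"
    using min_coord_nonneg[OF x] by simp
  have supp: "{v. x v \<noteq> 0} \<subseteq> insert c \<sigma>"
    using x pos by (rule support_if_min_coord_pos)
  obtain v where v: "v \<in> \<sigma>" "x v = min_coord x"
    by (rule min_coord_attained)
  have push_supp: "{u. push x u \<noteq> 0} \<subseteq> insert c \<sigma> - {v}"
    using supp v by (auto simp: push_def split: if_splits)
  have "sum (push x) (insert c \<sigma> - {v}) = sum (push x) (insert c \<sigma>)"
    using v finite_face by (simp add: sum_diff1 push_def)
  also have "\<dots> = 1"
    using sum_push realization_points_sum[OF x _ supp] finite_face by simp
  finally show ?thesis
    using facet_in_collapsed[OF v(1)] push_supp push_nonneg[OF x]
    by (auto intro: realization_pointsI)
qed

lemma min_coord_zero_if_collapsed: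
  assumes x: "x \<in> realization_points (K - {\<sigma>, insert c \<sigma>})"
  shows "min_coord x = 0"
proof (rule ccontr)
  assume "min_coord x \<noteq> 0"
  moreover have "x \<in> realization_points K"
    using x realization_points_mono by blast
  ultimately have pos: "0 < min_coord x"
    using min_coord_nonneg by force
  obtain \<rho> where \<rho>: "\<rho> \<in> K - {\<sigma>, insert c \<sigma>}" "{v. x v \<noteq> 0} \<subseteq> \<rho>"
    using x by (rule realization_pointsE)
  have "\<sigma> \<subseteq> \<rho>"
    using min_coord_le[of _ x] pos \<rho>(2) by force
  moreover have "\<rho> \<subseteq> insert c \<sigma>"
    using free \<rho>(1) calculation by blast
  ultimately show False
    using \<rho>(1) by blast
qed

lemma homotopy_stays_in_realization:
  assumes t: "t \<in> {0..1}" and x: "x \<in> realization_points K"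
  shows "(\<lambda>v. (1 - t) * x v + t * push x v) \<in> realization_points K"
proof (cases "min_coord x = 0")
  case True
  then show ?thesis
    using x by (simp add: push_eq_self algebra_simps)
next
  case False
  then have pos: "0 < min_coord x"
    using min_coord_nonneg[OF x] by simp
  have supp: "{v. x v \<noteq> 0} \<subseteq> insert c \<sigma>"
    using x pos by (rule support_if_min_coord_pos)
  then have push_supp: "{v. push x v \<noteq> 0} \<subseteq> insert c \<sigma>"
    by (auto simp: push_def split: if_splits)
  have "sum (\<lambda>v. (1 - t) * x v + t * push x v) (insert c \<sigma>)
      = (1 - t) * sum x (insert c \<sigma>) + t * sum (push x) (insert c \<sigma>)"
    by (simp add: sum.distrib sum_distrib_left)
  also have "\<dots> = 1"
    using sum_push realization_points_sum[OF x _ supp] finite_face by simp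
  finally have "sum (\<lambda>v. (1 - t) * x v + t * push x v) (insert c \<sigma>) = 1" .
  moreover have "{v. (1 - t) * x v + t * push x v \<noteq> 0} \<subseteq> insert c \<sigma>"
  proof
    fix v
    assume v: "v \<in> {v. (1 - t) * x v + t * push x v \<noteq> 0}"
    show "v \<in> insert c \<sigma>"
    proof (rule ccontr)
      assume "v \<notin> insert c \<sigma>"
      then have "x v = 0" "push x v = 0"
        using supp push_supp by auto
      then show False
        using v by simp
    qed
  qed
  moreover have "0 \<le> (1 - t) * x v + t * push x v" for v
    using t x push_nonneg[OF x, of v] by (auto elim!: realization_pointsE)
  ultimately show ?thesis
    using coface_in by (auto intro: realization_pointsI)
qed

lemma continuous_map_push_coordinate:
  "continuous_map (realization K) euclideanreal (\<lambda>x. push x v)"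
proof -
  have "continuous_map (realization K) euclideanreal min_coord"
    unfolding min_coord_def
    using continuous_map_Min[OF finite_face face_nonempty continuous_map_realization_coordinate]
    by simp
  then show ?thesis
    unfolding push_def
    by (cases "v \<in> \<sigma>"; cases "v = c")
      (auto intro!: continuous_intros continuous_map_realization_coordinate)
qed

lemma elementary_collapse: "elementary_collapse K (K - {\<sigma>, insert c \<sigma>})"
proof -
  have "\<rho> = \<sigma> \<or> \<rho> = insert c \<sigma>" if "\<rho> \<in> K" "\<sigma> \<subseteq> \<rho>" for \<rho>
  proof -
    have "\<rho> \<subseteq> insert c \<sigma>"
      using free that by blast
    then show ?thesis
      using that(2) by (cases "c \<in> \<rho>") (auto intro!: subset_antisym)
  qed
  moreover have "\<sigma> \<subset> insert c \<sigma>"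
    using apex_notin by blast
  ultimately show ?thesis
    unfolding elementary_collapse_def using face_in coface_in by blast
qed

theorem homotopy_equivalent_collapse:
  "realization K homotopy_equivalent_space realization (K - {\<sigma>, insert c \<sigma>})"
proof -
  let ?K' = "K - {\<sigma>, insert c \<sigma>}"
  define h where "h = (\<lambda>(t, x). \<lambda>v. (1 - t) * x v + t * push x v)"
  have "continuous_map (prod_topology (top_of_set {0..1}) (realization K)) (realization K) h"
  proof (rule continuous_map_into_realization)
    have fst: "continuous_map (prod_topology (top_of_set {0..1}) (realization K)) euclideanreal fst"
      by (rule continuous_map_into_fulltopology[OF continuous_map_fst])
    show "continuous_map (prod_topology (top_of_set {0..1}) (realization K)) euclideanreal (\<lambda>p. h p v)"
      for v
      unfolding h_def case_prod_beta
      by (intro continuous_intros fst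
          continuous_map_compose[OF continuous_map_snd continuous_map_realization_coordinate, unfolded o_def]
          continuous_map_compose[OF continuous_map_snd continuous_map_push_coordinate, unfolded o_def])
  qed (auto simp: h_def homotopy_stays_in_realization)
  then have "homotopic_with (\<lambda>x. True) (realization K) (realization K) id push"
    unfolding homotopic_with_def
    by (intro exI[of _ h]) (auto simp: h_def)
  moreover have "retraction_maps (realization K) (realization ?K') push id"
    unfolding retraction_maps_def
  proof (intro conjI ballI)
    show "continuous_map (realization K) (realization ?K') push"
      by (intro continuous_map_into_realization continuous_map_push_coordinate)
        (simp add: push_in_collapsed)
    show "continuous_map (realization ?K') (realization K) id"
      using realization_points_mono[of ?K' K]
      by (intro continuous_map_into_realization) (auto simp: continuous_map_realization_coordinate)
    show "push (id x) = x" if "x \<in> topspace (realization ?K')" for x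
      using that by (simp add: min_coord_zero_if_collapsed push_eq_self)
  qed
  ultimately show ?thesis
    by (rule deformation_retract_imp_homotopy_equivalent_space[OF homotopic_with_symD])
qed

end

datatype 'a elementary_move = is_collapse: Collapse "'a set" 'a | Expand "'a set" 'a

fun formal_deformation :: "'a elementary_move list \<Rightarrow> 'a set set \<Rightarrow> 'a set set \<Rightarrow> bool" where
  "formal_deformation [] K L \<longleftrightarrow> K = L"
| "formal_deformation (Collapse \<sigma> c # ms) K L \<longleftrightarrow>
     free_face K \<sigma> c \<and> formal_deformation ms (K - {\<sigma>, insert c \<sigma>}) L"
| "formal_deformation (Expand \<sigma> c # ms) K L \<longleftrightarrow>
     \<sigma> \<notin> K \<and> insert c \<sigma> \<notin> K \<and> free_face (insert \<sigma> (insert (insert c \<sigma>) K)) \<sigma> c \<and>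
     formal_deformation ms (insert \<sigma> (insert (insert c \<sigma>) K)) L"

lemma expansion_inverse:
  assumes "\<sigma> \<notin> K" "insert c \<sigma> \<notin> K" "c \<notin> \<sigma>"
  shows "insert \<sigma> (insert (insert c \<sigma>) K) - {\<sigma>, insert c \<sigma>} = K"
  using assms by auto

theorem homotopy_equivalent_if_formal_deformation:
  "formal_deformation ms K L \<Longrightarrow> realization K homotopy_equivalent_space realization L"
proof (induction ms arbitrary: K)
  case Nil
  then show ?case
    by (simp add: homotopy_equivalent_space_refl)
next
  case (Cons m ms)
  show ?case
  proof (cases m)
    case (Collapse \<sigma> c)
    then have "free_face K \<sigma> c" and "formal_deformation ms (K - {\<sigma>, insert c \<sigma>}) L"
      using Cons.prems by auto
    then show ?thesis
      using homotopy_eqv_trans[OF free_face.homotopy_equivalent_collapse Cons.IH] by blast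
  next
    case (Expand \<sigma> c)
    let ?K = "insert \<sigma> (insert (insert c \<sigma>) K)"
    have new: "\<sigma> \<notin> K" "insert c \<sigma> \<notin> K" and ff: "free_face ?K \<sigma> c"
      and rest: "formal_deformation ms ?K L"
      using Cons.prems Expand by auto
    have "realization ?K homotopy_equivalent_space realization K"
      using free_face.homotopy_equivalent_collapse[OF ff]
      by (simp add: expansion_inverse[OF new free_face.apex_notin[OF ff]])
    then show ?thesis
      using homotopy_eqv_trans[OF _ Cons.IH[OF rest]] homotopy_equivalent_space_sym by blast
  qed
qed

lemma collapses_to_step: "elementary_collapse K K' \<Longrightarrow> collapses_to K' L \<Longrightarrow> collapses_to K L"
  unfolding collapses_to_def by (rule converse_rtrancl_into_rtrancl) auto

theorem collapses_to_if_formal_deformation: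
  "formal_deformation ms K L \<Longrightarrow> list_all is_collapse ms \<Longrightarrow> collapses_to K L"
proof (induction ms arbitrary: K)
  case Nil
  then show ?case
    by (simp add: collapses_to_def)
next
  case (Cons m ms)
  then obtain \<sigma> c where m: "m = Collapse \<sigma> c"
    by (cases m) auto
  then have ff: "free_face K \<sigma> c" and rest: "formal_deformation ms (K - {\<sigma>, insert c \<sigma>}) L"
    using Cons.prems by auto
  have "collapses_to (K - {\<sigma>, insert c \<sigma>}) L"
    using Cons.IH[OF rest] Cons.prems(2) by simp
  then show ?case
    by (rule collapses_to_step[OF free_face.elementary_collapse[OF ff]])
qed

definition relabel_point :: "('a \<Rightarrow> 'b) \<Rightarrow> 'a set \<Rightarrow> ('b \<Rightarrow> real) \<Rightarrow> 'a \<Rightarrow> real" where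
  "relabel_point g V y = (\<lambda>v. if v \<in> V then y (g v) else 0)"

lemma relabel_point_in_realization:
  assumes g: "inj_on g (\<Union>K)" and y: "y \<in> realization_points ((`) g ` K)"
  shows "relabel_point g (\<Union>K) y \<in> realization_points K"
proof -
  obtain \<sigma> where nn: "\<forall>w. 0 \<le> y w" and \<sigma>: "\<sigma> \<in> K" "{w. y w \<noteq> 0} \<subseteq> g ` \<sigma>" "sum y (g ` \<sigma>) = 1"
    using y unfolding realization_points_def by blast
  have inj: "inj_on g \<sigma>"
    using g \<sigma>(1) by (meson Union_upper inj_on_subset)
  have "{v. relabel_point g (\<Union>K) y v \<noteq> 0} \<subseteq> \<sigma>"
  proof
    fix v
    assume "v \<in> {v. relabel_point g (\<Union>K) y v \<noteq> 0}"
    then have "v \<in> \<Union>K" "g v \<in> g ` \<sigma>"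
      using \<sigma>(2) by (auto simp: relabel_point_def split: if_splits)
    then show "v \<in> \<sigma>"
      using g \<sigma>(1) by (auto dest: inj_onD)
  qed
  moreover have "sum (relabel_point g (\<Union>K) y) \<sigma> = sum (y \<circ> g) \<sigma>"
    by (rule sum.cong) (use \<sigma>(1) in \<open>auto simp: relabel_point_def\<close>)
  moreover have "sum (y \<circ> g) \<sigma> = 1"
    using \<sigma>(3) sum.reindex[OF inj, of y] by simp
  ultimately show ?thesis
    using nn \<sigma>(1) by (intro realization_pointsI) (auto simp: relabel_point_def)
qed

lemma relabel_point_inverse:
  assumes "inj_on g V" "{w. y w \<noteq> 0} \<subseteq> g ` V"
  shows "relabel_point (inv_into V g) (g ` V) (relabel_point g V y) = y"
proof
  fix w
  show "relabel_point (inv_into V g) (g ` V) (relabel_point g V y) w = y w"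
  proof (cases "w \<in> g ` V")
    case True
    then obtain v where "v \<in> V" "w = g v"
      by blast
    then show ?thesis
      using assms(1) by (simp add: relabel_point_def)
  next
    case False
    then show ?thesis
      using assms(2) by (auto simp: relabel_point_def)
  qed
qed

lemma relabel_point_inverse':
  assumes "inj_on g V" "{v. x v \<noteq> 0} \<subseteq> V"
  shows "relabel_point g V (relabel_point (inv_into V g) (g ` V) x) = x"
  using assms by (auto simp: relabel_point_def fun_eq_iff)

lemma continuous_map_relabel_point:
  "(\<And>x. x \<in> topspace (realization L) \<Longrightarrow> relabel_point g V x \<in> realization_points K) \<Longrightarrow>
    continuous_map (realization L) (realization K) (relabel_point g V)"
  by (intro continuous_map_into_realization)
    (auto simp: relabel_point_def continuous_map_realization_coordinate)

theorem realization_image_homeomorphic: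
  assumes g: "inj_on g (\<Union>K)"
  shows "realization ((`) g ` K) homeomorphic_space realization K"
proof -
  let ?V = "\<Union>K" and ?h = "inv_into (\<Union>K) g"
  have image_g: "\<Union>((`) g ` K) = g ` ?V"
    by auto
  have h_inj: "inj_on ?h (\<Union>((`) g ` K))"
    unfolding image_g by (rule inj_on_inv_into) simp
  have hgK: "(`) ?h ` (`) g ` K = K"
  proof -
    have "?h ` g ` \<rho> = \<rho>" if "\<rho> \<in> K" for \<rho>
      using inv_into_image_cancel[OF g] that by blast
    then show ?thesis
      by (simp add: image_image)
  qed
  have to_image: "relabel_point ?h (g ` ?V) x \<in> realization_points ((`) g ` K)"
    if "x \<in> realization_points K" for x
    using relabel_point_in_realization[OF h_inj, of x] that unfolding hgK image_g by simp
  have from_image: "relabel_point g ?V y \<in> realization_points K"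
    if "y \<in> realization_points ((`) g ` K)" for y
    using g that by (rule relabel_point_in_realization)
  have "relabel_point ?h (g ` ?V) (relabel_point g ?V y) = y"
    if "y \<in> realization_points ((`) g ` K)" for y
  proof -
    have "{w. y w \<noteq> 0} \<subseteq> g ` ?V"
      using realization_points_support[OF that] image_g by blast
    then show ?thesis
      by (rule relabel_point_inverse[OF g])
  qed
  moreover have "relabel_point g ?V (relabel_point ?h (g ` ?V) x) = x"
    if "x \<in> realization_points K" for x
  proof -
    have "{v. x v \<noteq> 0} \<subseteq> ?V"
      using realization_points_support[OF that] by blast
    then show ?thesis
      by (rule relabel_point_inverse'[OF g])
  qed
  ultimately have "homeomorphic_maps (realization ((`) g ` K)) (realization K)
      (relabel_point g ?V) (relabel_point ?h (g ` ?V))"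
    unfolding homeomorphic_maps_def using to_image from_image
    by (auto intro!: continuous_map_relabel_point)
  then show ?thesis
    unfolding homeomorphic_space_def by blast
qed

lemma simp_iso_image_image:
  assumes g: "inj_on g (\<Union>K)" and p: "inj_on p (\<Union>K)"
  shows "simp_iso ((`) g ` K) ((`) p ` K)"
proof -
  let ?U = "\<Union>K"
  define f where "f = p \<circ> inv_into ?U g"
  have bij: "bij_betw f (g ` ?U) (p ` ?U)"
    unfolding f_def
    by (rule bij_betw_trans[OF bij_betw_inv_into[OF inj_on_imp_bij_betw[OF g]] inj_on_imp_bij_betw[OF p]])
  have "\<sigma> \<in> (`) g ` K \<longleftrightarrow> f ` \<sigma> \<in> (`) p ` K" if \<sigma>: "\<sigma> \<subseteq> g ` ?U" for \<sigma>
  proof -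
    define \<sigma>0 where "\<sigma>0 = inv_into ?U g ` \<sigma>"
    have \<sigma>0: "\<sigma>0 \<in> Pow ?U"
      using \<sigma> unfolding \<sigma>0_def by (auto intro: inv_into_into)
    have "\<sigma> = g ` \<sigma>0" "f ` \<sigma> = p ` \<sigma>0"
      using image_inv_into_cancel[OF refl \<sigma>] unfolding \<sigma>0_def f_def by (simp_all add: image_comp)
    moreover have "K \<subseteq> Pow ?U"
      by blast
    ultimately show ?thesis
      using inj_on_image_mem_iff[OF inj_on_image_Pow[OF g] \<sigma>0]
        inj_on_image_mem_iff[OF inj_on_image_Pow[OF p] \<sigma>0] by simp
  qed
  moreover have "vertices ((`) g ` K) = g ` ?U" "vertices ((`) p ` K) = p ` ?U"
    unfolding vertices_def by auto
  ultimately show ?thesis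
    unfolding simp_iso_def using bij by metis
qed

lemma elementary_collapse_image:
  assumes ec: "elementary_collapse K K'" and g: "inj_on g (\<Union>K)"
  shows "elementary_collapse ((`) g ` K) ((`) g ` K')"
proof -
  obtain \<sigma> \<tau> where st: "\<sigma> \<in> K" "\<tau> \<in> K" "\<sigma> \<subset> \<tau>"
    and free: "\<forall>\<rho>\<in>K. \<sigma> \<subseteq> \<rho> \<longrightarrow> \<rho> = \<sigma> \<or> \<rho> = \<tau>" and K': "K' = K - {\<sigma>, \<tau>}"
    using ec unfolding elementary_collapse_def by blast
  have sub: "\<rho> \<subseteq> \<Union>K" if "\<rho> \<in> K" for \<rho>
    using that by blast
  have inj: "inj_on ((`) g) K"
    by (rule inj_onI) (metis g inj_on_image_eq_iff sub)
  show ?thesis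
    unfolding elementary_collapse_def
  proof (intro exI conjI ballI impI)
    show "g ` \<sigma> \<in> (`) g ` K" "g ` \<tau> \<in> (`) g ` K"
      using st by auto
    show "g ` \<sigma> \<subset> g ` \<tau>"
      using st g sub by (metis inj_on_image_eq_iff inj_on_image_subset_iff psubset_eq)
    show "\<rho> = g ` \<sigma> \<or> \<rho> = g ` \<tau>" if \<rho>: "\<rho> \<in> (`) g ` K" and above: "g ` \<sigma> \<subseteq> \<rho>" for \<rho>
    proof -
      obtain \<rho>0 where \<rho>0: "\<rho>0 \<in> K" "\<rho> = g ` \<rho>0"
        using \<rho> by blast
      then have "\<sigma> \<subseteq> \<rho>0"
        using above st g sub by (metis inj_on_image_subset_iff)
      then show ?thesis
        using free \<rho>0 by blast
    qed
    show "(`) g ` K' = (`) g ` K - {g ` \<sigma>, g ` \<tau>}"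
      unfolding K' using inj st by (auto simp: inj_on_image_set_diff inj_on_eq_iff)
  qed
qed

lemma collapses_to_image:
  assumes "collapses_to K L" "inj_on g (\<Union>K)"
  shows "collapses_to ((`) g ` K) ((`) g ` L)"
proof -
  have "(K, L) \<in> {(A, B). elementary_collapse A B}\<^sup>*"
    using assms(1) unfolding collapses_to_def .
  then have "collapses_to ((`) g ` K) ((`) g ` L) \<and> L \<subseteq> K"
  proof (induction rule: rtrancl_induct)
    case base
    then show ?case
      by (simp add: collapses_to_def)
  next
    case (step Y Z)
    then have ec: "elementary_collapse Y Z" and YK: "Y \<subseteq> K"
      by auto
    have "inj_on g (\<Union>Y)"
      using assms(2) YK by (meson Sup_subset_mono inj_on_subset)
    then have "elementary_collapse ((`) g ` Y) ((`) g ` Z)"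
      by (rule elementary_collapse_image[OF ec])
    moreover have "Z \<subseteq> Y"
      using ec unfolding elementary_collapse_def by auto
    ultimately show ?case
      using step unfolding collapses_to_def by (auto intro: rtrancl_into_rtrancl)
  qed
  then show ?thesis
    by blast
qed

section \<open>A bouquet of triangles is a wedge of circles\<close>

definition triangle_boundary :: "(real \<times> real) set" where
  "triangle_boundary = {(a, b). 0 \<le> a \<and> 0 \<le> b \<and> a + b \<le> 1 \<and> (a = 0 \<or> b = 0 \<or> a + b = 1)}"

definition centred :: "real \<Rightarrow> real \<Rightarrow> complex" where
  "centred a b = Complex (a - 1/3) (b - 1/3)"

text \<open>The Minkowski gauge of the triangle \<open>0 \<le> a, 0 \<le> b, a + b \<le> 1\<close> centred at its
  barycentre: positively homogeneous in \<open>centred a b\<close> and equal to \<open>1\<close> exactly on the boundary.\<close>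

definition triangle_gauge :: "real \<Rightarrow> real \<Rightarrow> real" where
  "triangle_gauge a b = max (max (1 - 3*a) (1 - 3*b)) (3*a + 3*b - 2)"

lemma triangle_gauge_boundary: "(a, b) \<in> triangle_boundary \<Longrightarrow> triangle_gauge a b = 1"
  unfolding triangle_boundary_def triangle_gauge_def by auto

lemma centred_nonzero: "(a, b) \<in> triangle_boundary \<Longrightarrow> centred a b \<noteq> 0"
  unfolding triangle_boundary_def centred_def by (auto simp: complex_eq_iff)

lemma zero_in_triangle_boundary: "(0, 0) \<in> triangle_boundary"
  unfolding triangle_boundary_def by simp

lemma sgn_eq_imp_scaleR:
  fixes u v :: complex
  assumes "u \<noteq> 0" "v \<noteq> 0" "sgn u = sgn v"
  shows "v = (norm v / norm u) *\<^sub>R u"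
proof -
  have "v = norm v *\<^sub>R sgn v"
    using assms(2) by (simp add: sgn_div_norm)
  also have "\<dots> = norm v *\<^sub>R sgn u"
    using assms by simp
  also have "\<dots> = (norm v / norm u) *\<^sub>R u"
    by (simp add: sgn_div_norm divide_inverse)
  finally show ?thesis .
qed

text \<open>\<open>sgn (centred a b)\<close> is the radial projection from the barycentre onto the unit circle.\<close>

lemma triangle_boundary_sgn_inj:
  assumes ab: "(a, b) \<in> triangle_boundary" and ab': "(a', b') \<in> triangle_boundary"
    and eq: "sgn (centred a b) = sgn (centred a' b')"
  shows "a = a' \<and> b = b'"
proof -
  define l where "l = norm (centred a' b') / norm (centred a b)"
  have l: "l > 0"
    unfolding l_def using centred_nonzero[OF ab] centred_nonzero[OF ab'] by simp
  have "centred a' b' = l *\<^sub>R centred a b"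
    unfolding l_def by (rule sgn_eq_imp_scaleR[OF centred_nonzero[OF ab] centred_nonzero[OF ab'] eq])
  then have e1: "a' - 1/3 = l * (a - 1/3)" and e2: "b' - 1/3 = l * (b - 1/3)"
    unfolding centred_def by (auto simp: complex_eq_iff)
  have "triangle_gauge a' b' = l * triangle_gauge a b"
  proof -
    have "1 - 3*a' = l * (1 - 3*a)" "1 - 3*b' = l * (1 - 3*b)"
      "3*a' + 3*b' - 2 = l * (3*a + 3*b - 2)"
      using e1 e2 by (auto simp: algebra_simps)
    moreover have "max (l * x) (l * y) = l * max x y" for x y
      using l by (simp add: max_def)
    ultimately show ?thesis
      unfolding triangle_gauge_def by simp
  qed
  then have "l = 1"
    using triangle_gauge_boundary[OF ab] triangle_gauge_boundary[OF ab'] by simp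
  then show ?thesis
    using e1 e2 by simp
qed

lemma triangle_boundary_sgn_surj:
  fixes w :: complex
  assumes "norm w = 1"
  obtains a b where "(a, b) \<in> triangle_boundary" "sgn (centred a b) = w"
proof -
  define M where "M = max (max (- Re w) (- Im w)) (Re w + Im w)"
  have bounds: "- Re w \<le> M" "- Im w \<le> M" "Re w + Im w \<le> M"
    and attained: "M = - Re w \<or> M = - Im w \<or> M = Re w + Im w"
    unfolding M_def by auto
  have M: "M > 0"
  proof (rule ccontr)
    assume "\<not> M > 0"
    then have "Re w = 0" "Im w = 0"
      using bounds by linarith+
    then show False
      using assms by (simp add: complex_eq_iff cmod_def)
  qed
  define a where "a = (M + Re w) / (3*M)"
  define b where "b = (M + Im w) / (3*M)"
  have rest: "1 - a - b = (M - Re w - Im w) / (3*M)"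
    unfolding a_def b_def using M by (simp add: field_simps)
  have "0 \<le> a" "0 \<le> b"
    unfolding a_def b_def using bounds M by auto
  moreover have "0 \<le> 1 - a - b"
    unfolding rest using bounds M by auto
  moreover have "a = 0 \<or> b = 0 \<or> 1 - a - b = 0"
    unfolding rest using attained M by (auto simp: a_def b_def)
  ultimately have "(a, b) \<in> triangle_boundary"
    unfolding triangle_boundary_def by auto
  moreover have "sgn (centred a b) = w"
  proof -
    have "centred a b = of_real (1 / (3*M)) * w"
      unfolding centred_def a_def b_def using M by (simp add: complex_eq_iff field_simps)
    then have "sgn (centred a b) = of_real (sgn (1 / (3*M))) * sgn w"
      by (simp only: sgn_mult sgn_of_real)
    also have "\<dots> = w"
      using M assms by (simp add: sgn_div_norm)
    finally show ?thesis .
  qed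
  ultimately show thesis
    using that by blast
qed

lemma compact_triangle_boundary: "compact triangle_boundary"
proof -
  have "triangle_boundary = {p. 0 \<le> fst p} \<inter> {p. 0 \<le> snd p} \<inter> {p. fst p + snd p \<le> 1} \<inter>
      ({p. fst p = 0} \<union> {p. snd p = 0} \<union> {p. fst p + snd p = 1})"
    unfolding triangle_boundary_def by auto
  moreover have "closed \<dots>"
    by (intro closed_Int closed_Un closed_Collect_le closed_Collect_eq continuous_intros)
  moreover have "triangle_boundary \<subseteq> cbox (0, 0) (1, 1)"
    unfolding triangle_boundary_def by (auto simp: cbox_Pair_eq)
  ultimately show ?thesis
    by (metis bounded_cbox bounded_subset compact_eq_bounded_closed)
qed

lemma circles_meet_at_zero:
  fixes z :: complex
  assumes "cmod (z - of_nat k) = real k" "cmod (z - of_nat j) = real j" "k \<noteq> j"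
  shows "z = 0"
proof -
  have "(cmod z)\<^sup>2 = 2 * real i * Re z" if "cmod (z - of_nat i) = real i" for i
  proof -
    have "(cmod (z - of_nat i))\<^sup>2 = (cmod z)\<^sup>2 - 2 * real i * Re z + (real i)\<^sup>2"
      unfolding cmod_power2 by (simp add: power2_diff)
    then show ?thesis
      using that by simp
  qed
  then have "2 * real k * Re z = 2 * real j * Re z"
    using assms(1,2) by metis
  then have "Re z = 0"
    using assms(3) by simp
  then have "(cmod z)\<^sup>2 = 0"
    using \<open>\<And>i. _ \<Longrightarrow> _\<close> assms(1) by simp
  then show ?thesis
    by simp
qed

definition triangle_bouquet :: "nat \<Rightarrow> (nat \<Rightarrow> nat) \<Rightarrow> (nat \<Rightarrow> nat) \<Rightarrow> nat set set" where
  "triangle_bouquet n P Q =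
     insert {0} (\<Union>k\<in>{1..n}. {{P k}, {Q k}, {0, P k}, {P k, Q k}, {0, Q k}})"

definition base_direction :: complex where
  "base_direction = sgn (centred 0 0)"

lemma norm_base_direction: "norm base_direction = 1"
  unfolding base_direction_def using centred_nonzero[OF zero_in_triangle_boundary]
  by (simp add: norm_sgn)

lemma cnj_base_direction: "cnj base_direction * base_direction = 1"
  using complex_norm_square[of base_direction] norm_base_direction by (simp add: mult.commute)

locale triangle_bouquet_labels =
  fixes n :: nat and P Q :: "nat \<Rightarrow> nat"
  assumes n_pos: "0 < n"
    and labels: "\<And>k. k \<in> {1..n} \<Longrightarrow> P k \<noteq> 0 \<and> Q k \<noteq> 0 \<and> P k \<noteq> Q k"
    and labels_distinct: "\<And>k j. k \<in> {1..n} \<Longrightarrow> j \<in> {1..n} \<Longrightarrow> k \<noteq> j \<Longrightarrow>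
      P k \<noteq> P j \<and> Q k \<noteq> Q j \<and> P k \<noteq> Q j"
begin

definition triangle_point :: "nat \<Rightarrow> real \<Rightarrow> real \<Rightarrow> nat \<Rightarrow> real" where
  "triangle_point k a b =
     (\<lambda>v. if v = P k then a else if v = Q k then b else if v = 0 then 1 - a - b else 0)"

text \<open>The \<open>k\<close>-th triangle is sent by radial projection onto the circle of radius \<open>k\<close> about \<open>k\<close>,
  rotated so that the common vertex \<open>0\<close> goes to the origin; on the other triangles the \<open>k\<close>-th
  summand vanishes.\<close>

definition bouquet_map :: "(nat \<Rightarrow> real) \<Rightarrow> complex" where
  "bouquet_map x = (\<Sum>k\<in>{1..n}. of_nat k * (1 - cnj base_direction * sgn (centred (x (P k)) (x (Q k)))))"

lemma triangle_point_P:
  "k \<in> {1..n} \<Longrightarrow> j \<in> {1..n} \<Longrightarrow> triangle_point k a b (P j) = (if j = k then a else 0)"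
  using labels[of j] labels_distinct[of j k] by (auto simp: triangle_point_def)

lemma triangle_point_Q:
  "k \<in> {1..n} \<Longrightarrow> j \<in> {1..n} \<Longrightarrow> triangle_point k a b (Q j) = (if j = k then b else 0)"
  using labels[of j] labels[of k] labels_distinct[of j k] labels_distinct[of k j]
  by (auto simp: triangle_point_def)

lemma triangle_point_origin:
  "k \<in> {1..n} \<Longrightarrow> triangle_point k 0 0 = (\<lambda>v. if v = 0 then 1 else 0)"
  using labels[of k] by (auto simp: triangle_point_def fun_eq_iff)

lemma bouquet_map_triangle_point:
  assumes k: "k \<in> {1..n}"
  shows "bouquet_map (triangle_point k a b) = of_nat k * (1 - cnj base_direction * sgn (centred a b))"
proof -
  have "bouquet_map (triangle_point k a b) =
      (\<Sum>j\<in>{1..n}. if j = k then of_nat k * (1 - cnj base_direction * sgn (centred a b)) else 0)"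
    unfolding bouquet_map_def
    by (rule sum.cong)
      (use triangle_point_P[OF k] triangle_point_Q[OF k] cnj_base_direction in
        \<open>simp_all add: base_direction_def[symmetric]\<close>)
  then show ?thesis
    using k by simp
qed

lemma triangle_bouquet_simplexE:
  assumes "\<sigma> \<in> triangle_bouquet n P Q"
  obtains k where "k \<in> {1..n}" "\<sigma> \<subseteq> {0, P k, Q k}" "P k \<notin> \<sigma> \<or> Q k \<notin> \<sigma> \<or> 0 \<notin> \<sigma>"
proof (cases "\<sigma> = {0}")
  case True
  then show thesis
    using that[of 1] n_pos labels[of 1] by auto
next
  case False
  then obtain k where k: "k \<in> {1..n}"
    and "\<sigma> = {P k} \<or> \<sigma> = {Q k} \<or> \<sigma> = {0, P k} \<or> \<sigma> = {P k, Q k} \<or> \<sigma> = {0, Q k}"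
    using assms unfolding triangle_bouquet_def by blast
  then show thesis
    using that[OF k] labels[OF k] by (elim disjE) auto
qed

lemma triangle_point_simplexE:
  assumes k: "k \<in> {1..n}" and ab: "(a, b) \<in> triangle_boundary"
  obtains \<sigma> where "\<sigma> \<in> triangle_bouquet n P Q" "\<sigma> \<subseteq> {0, P k, Q k}"
    "{v. triangle_point k a b v \<noteq> 0} \<subseteq> \<sigma>"
proof -
  have edges: "{0, Q k} \<in> triangle_bouquet n P Q" "{0, P k} \<in> triangle_bouquet n P Q"
    "{P k, Q k} \<in> triangle_bouquet n P Q"
    unfolding triangle_bouquet_def using k by blast+
  consider "a = 0" | "b = 0" | "a + b = 1"
    using ab unfolding triangle_boundary_def by blast
  then show thesis
  proof cases
    case 1
    then have "{v. triangle_point k a b v \<noteq> 0} \<subseteq> {0, Q k}"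
      by (auto simp: triangle_point_def split: if_splits)
    then show thesis
      using that[OF edges(1)] by blast
  next
    case 2
    then have "{v. triangle_point k a b v \<noteq> 0} \<subseteq> {0, P k}"
      by (auto simp: triangle_point_def split: if_splits)
    then show thesis
      using that[OF edges(2)] by blast
  next
    case 3
    then have "{v. triangle_point k a b v \<noteq> 0} \<subseteq> {P k, Q k}"
      by (auto simp: triangle_point_def split: if_splits)
    then show thesis
      using that[OF edges(3)] by blast
  qed
qed

lemma realization_points_triangle_bouquet:
  "realization_points (triangle_bouquet n P Q) =
     (\<Union>k\<in>{1..n}. (\<lambda>(a, b). triangle_point k a b) ` triangle_boundary)"
proof
  show "realization_points (triangle_bouquet n P Q) \<subseteq>
      (\<Union>k\<in>{1..n}. (\<lambda>(a, b). triangle_point k a b) ` triangle_boundary)"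
  proof
    fix x
    assume "x \<in> realization_points (triangle_bouquet n P Q)"
    then obtain \<sigma> where nn: "\<forall>v. 0 \<le> x v" and \<sigma>: "\<sigma> \<in> triangle_bouquet n P Q"
      "{v. x v \<noteq> 0} \<subseteq> \<sigma>" "finite \<sigma>" "sum x \<sigma> = 1"
      by (rule realization_pointsE)
    obtain k where k: "k \<in> {1..n}" and face: "\<sigma> \<subseteq> {0, P k, Q k}"
      and missing: "P k \<notin> \<sigma> \<or> Q k \<notin> \<sigma> \<or> 0 \<notin> \<sigma>"
      using \<sigma>(1) by (rule triangle_bouquet_simplexE)
    have distinct: "P k \<noteq> 0" "Q k \<noteq> 0" "P k \<noteq> Q k"
      using labels[OF k] by auto
    have zero: "x v = 0" if "v \<notin> \<sigma>" for v
      using that \<sigma>(2) by blast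
    have "sum x {0, P k, Q k} = 1"
      using sum_eq_if_support_subset[of x "{0, P k, Q k}" \<sigma>] \<sigma> face by auto
    then have sum3: "x 0 + x (P k) + x (Q k) = 1"
      using distinct by (simp add: add.assoc)
    have "x = triangle_point k (x (P k)) (x (Q k))"
      using sum3 distinct zero face by (auto simp: triangle_point_def fun_eq_iff)
    moreover have "(x (P k), x (Q k)) \<in> triangle_boundary"
    proof -
      have "x (P k) = 0 \<or> x (Q k) = 0 \<or> x 0 = 0"
        using missing zero by blast
      then show ?thesis
        using nn[rule_format, of 0] nn[rule_format, of "P k"] nn[rule_format, of "Q k"] sum3
        unfolding triangle_boundary_def by auto
    qed
    ultimately show "x \<in> (\<Union>k\<in>{1..n}. (\<lambda>(a, b). triangle_point k a b) ` triangle_boundary)"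
      using k by (auto intro!: bexI[of _ k] image_eqI[of _ _ "(x (P k), x (Q k))"])
  qed
  show "(\<Union>k\<in>{1..n}. (\<lambda>(a, b). triangle_point k a b) ` triangle_boundary) \<subseteq>
      realization_points (triangle_bouquet n P Q)"
  proof clarify
    fix k a b
    assume k: "k \<in> {1..n}" and ab: "(a, b) \<in> triangle_boundary"
    obtain \<sigma> where \<sigma>: "\<sigma> \<in> triangle_bouquet n P Q" "\<sigma> \<subseteq> {0, P k, Q k}"
      "{v. triangle_point k a b v \<noteq> 0} \<subseteq> \<sigma>"
      using k ab by (rule triangle_point_simplexE)
    have "sum (triangle_point k a b) {0, P k, Q k} = 1"
      using labels[OF k] by (simp add: triangle_point_def)
    then have "sum (triangle_point k a b) \<sigma> = 1"
      using sum_eq_if_support_subset[of "triangle_point k a b" \<sigma> "{0, P k, Q k}"] \<sigma>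
        finite_subset[OF \<sigma>(2)] by (auto simp: triangle_point_def)
    moreover have "\<forall>v. 0 \<le> triangle_point k a b v"
      using ab unfolding triangle_boundary_def by (auto simp: triangle_point_def)
    ultimately show "triangle_point k a b \<in> realization_points (triangle_bouquet n P Q)"
      using \<sigma> by (intro realization_pointsI) auto
  qed
qed

lemma bouquet_map_on_circle:
  assumes k: "k \<in> {1..n}" and ab: "(a, b) \<in> triangle_boundary"
  shows "cmod (bouquet_map (triangle_point k a b) - of_nat k) = real k"
proof -
  have "bouquet_map (triangle_point k a b) - of_nat k = - (of_nat k * (cnj base_direction * sgn (centred a b)))"
    by (simp add: bouquet_map_triangle_point[OF k] algebra_simps)
  then show ?thesis
    using centred_nonzero[OF ab] norm_base_direction by (simp add: norm_mult norm_sgn)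
qed

lemma bouquet_map_eq_zero:
  assumes k: "k \<in> {1..n}" and ab: "(a, b) \<in> triangle_boundary"
    and zero: "bouquet_map (triangle_point k a b) = 0"
  shows "a = 0 \<and> b = 0"
proof -
  have "cnj base_direction * sgn (centred a b) = 1"
    using zero k by (simp add: bouquet_map_triangle_point[OF k])
  then have "sgn (centred a b) = sgn (centred 0 0)"
    using cnj_base_direction unfolding base_direction_def
    by (metis mult.commute mult.left_neutral mult.assoc)
  then show ?thesis
    using triangle_boundary_sgn_inj[OF zero_in_triangle_boundary ab] by simp
qed

lemma inj_on_bouquet_map: "inj_on bouquet_map (realization_points (triangle_bouquet n P Q))"
proof (rule inj_onI)
  fix x y
  assume "x \<in> realization_points (triangle_bouquet n P Q)" "y \<in> realization_points (triangle_bouquet n P Q)"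
    and eq: "bouquet_map x = bouquet_map y"
  then obtain k a b j a' b' where k: "k \<in> {1..n}" and ab: "(a, b) \<in> triangle_boundary"
    and x: "x = triangle_point k a b" and j: "j \<in> {1..n}" and ab': "(a', b') \<in> triangle_boundary"
    and y: "y = triangle_point j a' b'"
    unfolding realization_points_triangle_bouquet by auto
  show "x = y"
  proof (cases "k = j")
    case True
    then have "cnj base_direction * sgn (centred a b) = cnj base_direction * sgn (centred a' b')"
      using eq k unfolding x y by (simp add: bouquet_map_triangle_point)
    moreover have "cnj base_direction \<noteq> 0"
      using norm_base_direction by auto
    ultimately show ?thesis
      using triangle_boundary_sgn_inj[OF ab ab'] x y True by simp
  next
    case False
    have "bouquet_map x = 0"
      using circles_meet_at_zero[OF _ _ False] bouquet_map_on_circle[OF k ab]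
        bouquet_map_on_circle[OF j ab'] eq x y by metis
    then have "a = 0 \<and> b = 0" "a' = 0 \<and> b' = 0"
      using bouquet_map_eq_zero[OF k ab] bouquet_map_eq_zero[OF j ab'] eq x y by auto
    then show ?thesis
      using x y triangle_point_origin[OF k] triangle_point_origin[OF j] by simp
  qed
qed

lemma bouquet_map_image:
  "bouquet_map ` realization_points (triangle_bouquet n P Q) = topspace (wedge_circles n)"
proof
  show "bouquet_map ` realization_points (triangle_bouquet n P Q) \<subseteq> topspace (wedge_circles n)"
    unfolding realization_points_triangle_bouquet wedge_circles_def
    using bouquet_map_on_circle by fastforce
  show "topspace (wedge_circles n) \<subseteq> bouquet_map ` realization_points (triangle_bouquet n P Q)"
  proof
    fix z
    assume "z \<in> topspace (wedge_circles n)"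
    then obtain k where k: "k \<in> {1..n}" and circle: "cmod (z - of_nat k) = real k"
      unfolding wedge_circles_def by auto
    have k_pos: "real k > 0"
      using k by auto
    define w where "w = base_direction * (1 - z / of_nat k)"
    have "1 - z / of_nat k = - (z - of_nat k) / of_nat k"
      using k_pos by (simp add: field_simps)
    then have "norm (1 - z / of_nat k) = 1"
      using circle k_pos by (simp add: norm_divide norm_minus_commute)
    then have "norm w = 1"
      unfolding w_def using norm_base_direction by (simp add: norm_mult)
    then obtain a b where ab: "(a, b) \<in> triangle_boundary" and w: "sgn (centred a b) = w"
      by (rule triangle_boundary_sgn_surj)
    have "bouquet_map (triangle_point k a b) = of_nat k * (1 - cnj base_direction * base_direction * (1 - z / of_nat k))"
      using bouquet_map_triangle_point[OF k] w unfolding w_def by (simp add: mult.assoc)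
    also have "\<dots> = z"
      using cnj_base_direction k_pos by (simp add: field_simps)
    finally show "z \<in> bouquet_map ` realization_points (triangle_bouquet n P Q)"
      unfolding realization_points_triangle_bouquet using k ab by force
  qed
qed

lemma continuous_map_bouquet_map:
  "continuous_map (realization (triangle_bouquet n P Q)) euclidean bouquet_map"
  unfolding continuous_map_atin
proof
  fix x
  assume x: "x \<in> topspace (realization (triangle_bouquet n P Q))"
  let ?F = "atin (realization (triangle_bouquet n P Q)) x"
  have coordinate: "((\<lambda>y. y v) \<longlongrightarrow> x v) ?F" for v
    using limitin_continuous_map[OF continuous_map_realization_coordinate x refl] by simp
  have "centred (x (P j)) (x (Q j)) \<noteq> 0" if j: "j \<in> {1..n}" for j
  proof -
    obtain k a b where k: "k \<in> {1..n}" and ab: "(a, b) \<in> triangle_boundary"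
      and "x = triangle_point k a b"
      using x unfolding topspace_realization realization_points_triangle_bouquet by auto
    then show ?thesis
      using centred_nonzero[of a b] centred_nonzero[OF zero_in_triangle_boundary]
        triangle_point_P[OF k j] triangle_point_Q[OF k j] by auto
  qed
  then have "(bouquet_map \<longlongrightarrow> bouquet_map x) ?F"
    unfolding bouquet_map_def centred_def
    by (intro tendsto_sum tendsto_mult tendsto_const tendsto_diff tendsto_sgn tendsto_Complex coordinate)
      (auto simp: centred_def)
  then show "limitin euclidean bouquet_map (bouquet_map x) ?F"
    by simp
qed

lemma compact_space_realization_triangle_bouquet:
  "compact_space (realization (triangle_bouquet n P Q))"
  unfolding realization_eq_subtopology
proof (rule compact_space_subtopology)
  have "continuous_map euclidean (powertop_real UNIV) (\<lambda>(a, b). triangle_point k a b)" for k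
    unfolding continuous_map_componentwise_UNIV
  proof
    fix v
    have "(\<lambda>p. (case p of (a, b) \<Rightarrow> triangle_point k a b) v) =
        (if v = P k then fst else if v = Q k then snd
         else if v = 0 then (\<lambda>p. 1 - fst p - snd p) else (\<lambda>p. 0))"
      by (auto simp: triangle_point_def fun_eq_iff)
    then show "continuous_map euclidean euclideanreal (\<lambda>p. (case p of (a, b) \<Rightarrow> triangle_point k a b) v)"
      by (auto intro!: continuous_intros)
  qed
  then have "compactin (powertop_real UNIV) (\<Union>k\<in>{1..n}. (\<lambda>(a, b). triangle_point k a b) ` triangle_boundary)"
    by (intro compactin_Union finite_imageI)
      (auto intro!: image_compactin simp: compact_triangle_boundary)
  then show "compactin (powertop_real UNIV) (realization_points (triangle_bouquet n P Q))"
    by (simp add: realization_points_triangle_bouquet)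
qed

theorem realization_triangle_bouquet_homeomorphic:
  "realization (triangle_bouquet n P Q) homeomorphic_space wedge_circles n"
proof -
  have "wedge_circles n = subtopology euclidean (topspace (wedge_circles n))"
    unfolding wedge_circles_def by simp
  moreover have "homeomorphic_map (realization (triangle_bouquet n P Q))
      (subtopology euclidean (topspace (wedge_circles n))) bouquet_map"
  proof (rule bijective_closed_imp_homeomorphic_map)
    show continuous: "continuous_map (realization (triangle_bouquet n P Q))
        (subtopology euclidean (topspace (wedge_circles n))) bouquet_map"
      using continuous_map_bouquet_map bouquet_map_image
      by (auto simp: continuous_map_in_subtopology)
    show "closed_map (realization (triangle_bouquet n P Q))
        (subtopology euclidean (topspace (wedge_circles n))) bouquet_map"
      by (rule continuous_imp_closed_map[OF continuous compact_space_realization_triangle_bouquet])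
        (simp add: Hausdorff_space_subtopology)
  qed (use bouquet_map_image inj_on_bouquet_map in simp_all)
  ultimately show ?thesis
    by (metis homeomorphic_map_imp_homeomorphic_space)
qed

end

section \<open>Acyclic matchings\<close>

lemma hasse_card: "(\<sigma>, \<tau>) \<in> hasse K \<Longrightarrow> card \<tau> = card \<sigma> + 1"
  unfolding hasse_def by simp

lemma hasse_mono: "K' \<subseteq> K \<Longrightarrow> hasse K' \<subseteq> hasse K"
  unfolding hasse_def by auto

lemma is_matching_subset: "is_matching W \<Longrightarrow> W' \<subseteq> W \<Longrightarrow> is_matching W'"
  unfolding is_matching_def by blast

lemma is_matching_eq:
  assumes "is_matching W" "(a, b) \<in> W" "(a', b') \<in> W" "a = a' \<or> a = b' \<or> b = a' \<or> b = b'"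
  shows "(a, b) = (a', b')"
  using assms unfolding is_matching_def by fastforce

definition modified_hasse :: "'a set set \<Rightarrow> ('a set \<times> 'a set) set \<Rightarrow> ('a set \<times> 'a set) set" where
  "modified_hasse K W = (hasse K - W) \<union> W\<inverse>"

lemma acyclic_matching_iff:
  "acyclic_matching K W \<longleftrightarrow> W \<subseteq> hasse K \<and> is_matching W \<and> acyclic (modified_hasse K W)"
  unfolding acyclic_matching_def modified_hasse_def ..

lemma acyclic_matching_by_potential:
  fixes f :: "'a set \<Rightarrow> int"
  assumes "W \<subseteq> hasse K" "is_matching W"
    and up: "\<forall>(\<sigma>, \<tau>) \<in> hasse K - W. f \<sigma> < f \<tau>" and down: "\<forall>(\<sigma>, \<tau>) \<in> W. f \<tau> < f \<sigma>"
  shows "acyclic_matching K W"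
proof -
  have "acyclic (modified_hasse K W)"
    unfolding modified_hasse_def
    by (rule acyclicI_order[where f = "\<lambda>\<sigma>. - f \<sigma>"]) (use up down in auto)
  then show ?thesis
    using assms unfolding acyclic_matching_iff by blast
qed

lemma acyclic_matching_mono:
  assumes "acyclic_matching K W" "K' \<subseteq> K" "W \<subseteq> hasse K'"
  shows "acyclic_matching K' W"
proof -
  have "modified_hasse K' W \<subseteq> modified_hasse K W"
    unfolding modified_hasse_def using hasse_mono[OF assms(2)] by blast
  then show ?thesis
    using assms acyclic_subset unfolding acyclic_matching_iff by blast
qed

text \<open>A path can descend only along matched pairs, and two matched pairs never follow each
  other; so a path leaving \<open>\<tau>\<close> upwards never gets back down to the level of \<open>\<sigma>\<close>.\<close>

lemma modified_hasse_path_above: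
  assumes WH: "W \<subseteq> hasse K" and matching: "is_matching W" and sub: "W' \<subseteq> W"
    and unmatched: "(\<sigma>, \<tau>) \<in> W - W'" and path: "(\<tau>, y) \<in> (modified_hasse K W')\<^sup>*"
  shows "card \<sigma> < card y"
proof -
  have "card \<tau> < card y \<or> (card y = card \<tau> \<and> (\<forall>z. (z, y) \<notin> W'))"
    using path
  proof (induction rule: rtrancl_induct)
    case base
    show ?case
      using unmatched sub is_matching_eq[OF matching] by blast
  next
    case (step y y')
    from step.hyps(2) show ?case
      unfolding modified_hasse_def
    proof
      assume "(y, y') \<in> hasse K - W'"
      then show ?case
        using step.IH hasse_card by fastforce
    next
      assume down: "(y, y') \<in> W'\<inverse>"
      then have "card y = card y' + 1"
        using sub WH hasse_card by fastforce
      moreover have "(z, y') \<notin> W'" for z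
      proof
        assume "(z, y') \<in> W'"
        then have "(z, y') = (y', y)"
          using down sub is_matching_eq[OF matching, of z y' y' y] by auto
        then show False
          using calculation by simp
      qed
      ultimately show ?case
        using step.IH down by auto
    qed
  qed
  moreover have "card \<tau> = card \<sigma> + 1"
    using unmatched WH hasse_card by blast
  ultimately show ?thesis
    by linarith
qed

lemma modified_hasse_path_cases:
  assumes sub: "W' \<subseteq> W" and path: "(x, y) \<in> (modified_hasse K W')\<^sup>+"
  shows "(x, y) \<in> (modified_hasse K W)\<^sup>+ \<or>
    (\<exists>\<sigma> \<tau>. (\<sigma>, \<tau>) \<in> W - W' \<and> (x, \<sigma>) \<in> (modified_hasse K W')\<^sup>* \<and> (\<tau>, y) \<in> (modified_hasse K W')\<^sup>*)"
  using path
proof (induction rule: trancl_induct)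
  case (base y)
  show ?case
  proof (cases "(x, y) \<in> W - W'")
    case True
    then show ?thesis
      by (intro disjI2 exI[of _ x] exI[of _ y]) simp
  next
    case False
    then have "(x, y) \<in> modified_hasse K W"
      using base sub unfolding modified_hasse_def by blast
    then show ?thesis
      by (intro disjI1 r_into_trancl)
  qed
next
  case (step y z)
  from step.IH show ?case
  proof
    assume xy: "(x, y) \<in> (modified_hasse K W)\<^sup>+"
    show ?case
    proof (cases "(y, z) \<in> W - W'")
      case True
      have "(x, y) \<in> (modified_hasse K W')\<^sup>*"
        using step.hyps(1) by (rule trancl_into_rtrancl)
      then show ?thesis
        using True by (intro disjI2 exI[of _ y] exI[of _ z]) simp
    next
      case False
      then have "(y, z) \<in> modified_hasse K W"
        using step.hyps(2) sub unfolding modified_hasse_def by blast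
      then have "(x, z) \<in> (modified_hasse K W)\<^sup>+"
        by (rule trancl_into_trancl[OF xy])
      then show ?thesis
        by (rule disjI1)
    qed
  next
    assume "\<exists>\<sigma> \<tau>. (\<sigma>, \<tau>) \<in> W - W' \<and> (x, \<sigma>) \<in> (modified_hasse K W')\<^sup>* \<and> (\<tau>, y) \<in> (modified_hasse K W')\<^sup>*"
    then obtain \<sigma> \<tau> where "(\<sigma>, \<tau>) \<in> W - W'" "(x, \<sigma>) \<in> (modified_hasse K W')\<^sup>*"
      "(\<tau>, y) \<in> (modified_hasse K W')\<^sup>*"
      by blast
    moreover have "(\<tau>, z) \<in> (modified_hasse K W')\<^sup>*"
      using rtrancl_into_rtrancl[OF calculation(3) step.hyps(2)] .
    ultimately show ?case
      by (intro disjI2 exI[of _ \<sigma>] exI[of _ \<tau>]) simp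
  qed
qed

lemma acyclic_matching_subset:
  assumes W: "acyclic_matching K W" and sub: "W' \<subseteq> W"
  shows "acyclic_matching K W'"
proof -
  have WH: "W \<subseteq> hasse K" and matching: "is_matching W" and acyclic: "acyclic (modified_hasse K W)"
    using W unfolding acyclic_matching_iff by auto
  have "(x, x) \<notin> (modified_hasse K W')\<^sup>+" for x
  proof
    assume "(x, x) \<in> (modified_hasse K W')\<^sup>+"
    then consider "(x, x) \<in> (modified_hasse K W)\<^sup>+"
      | \<sigma> \<tau> where "(\<sigma>, \<tau>) \<in> W - W'" "(x, \<sigma>) \<in> (modified_hasse K W')\<^sup>*"
          "(\<tau>, x) \<in> (modified_hasse K W')\<^sup>*"
      using modified_hasse_path_cases[OF sub] by blast
    then show False
    proof cases
      case 1
      then show False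
        using acyclic unfolding acyclic_def by blast
    next
      case 2
      then have "card \<sigma> < card \<sigma>"
        using modified_hasse_path_above[OF WH matching sub] by (meson rtrancl_trans)
      then show False
        by simp
    qed
  qed
  then have "acyclic (modified_hasse K W')"
    unfolding acyclic_def by blast
  then show ?thesis
    using WH sub is_matching_subset[OF matching sub] unfolding acyclic_matching_iff by blast
qed

lemma morse_complex_downward_closed:
  "W \<in> morse_complex K \<Longrightarrow> W' \<subseteq> W \<Longrightarrow> W' \<noteq> {} \<Longrightarrow> W' \<in> morse_complex K"
  unfolding morse_complex_def using acyclic_matching_subset by blast

section \<open>The Morse complexes of \<open>\<Delta>\<^sup>2\<close> and \<open>\<partial>\<Delta>\<^sup>2\<close>\<close>

lemma ball_Pow_insert: "(\<forall>A \<in> Pow (insert a S). P A) \<longleftrightarrow> (\<forall>A \<in> Pow S. P A \<and> P (insert a A))"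
  by (auto simp: Pow_insert)

text \<open>Lets the simplifier decide equality of explicitly enumerated finite sets.\<close>

lemma insert_eq_iff_Diff: "insert a A = B \<longleftrightarrow> a \<in> B \<and> A - {a} = B - {a}"
  by blast

lemma lessThan_nine: "{..<9::nat} = {0, 1, 2, 3, 4, 5, 6, 7, 8}"
  by auto

lemma lessThan_six: "{..<6::nat} = {0, 1, 2, 3, 4, 5}"
  by auto

text \<open>The Hasse diagram of \<open>\<partial>\<Delta>\<^sup>2\<close> is a hexagon, whose edges get the indices \<open>0, \<dots>, 5\<close> in
  cyclic order; the indices \<open>6, 7, 8\<close> are the edges from the three sides to the 2-face.\<close>

definition hasse_edge :: "nat \<Rightarrow> nat set \<times> nat set" where
  "hasse_edge i = [({0}, {0,1}), ({1}, {0,1}), ({1}, {1,2}), ({2}, {1,2}), ({2}, {0,2}),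
     ({0}, {0,2}), ({0,1}, {0,1,2}), ({1,2}, {0,1,2}), ({0,2}, {0,1,2})] ! i"

lemma Delta2_eq: "Delta2 = {{0}, {1}, {2}, {0,1}, {1,2}, {0,2}, {0,1,2}}"
proof -
  have "Delta2 = Pow {0,1,2} - {{}}"
    unfolding Delta2_def by auto
  also have "\<dots> = {{0}, {1}, {2}, {0,1}, {1,2}, {0,2}, {0,1,2}}"
    by (simp add: Pow_insert insert_eq_iff_Diff insert_Diff_if)
  finally show ?thesis .
qed

lemma bdDelta2_eq: "bdDelta2 = {{0}, {1}, {2}, {0,1}, {1,2}, {0,2}}"
proof -
  have "bdDelta2 = Pow {0,1,2} - {{}, {0,1,2}}"
    unfolding bdDelta2_def by auto
  also have "\<dots> = {{0}, {1}, {2}, {0,1}, {1,2}, {0,2}}"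
    by (simp add: Pow_insert insert_eq_iff_Diff insert_Diff_if)
  finally show ?thesis .
qed

lemma hasse_edge_simps:
  "hasse_edge 0 = ({0}, {0,1})" "hasse_edge 1 = ({1}, {0,1})" "hasse_edge 2 = ({1}, {1,2})"
  "hasse_edge 3 = ({2}, {1,2})" "hasse_edge 4 = ({2}, {0,2})" "hasse_edge 5 = ({0}, {0,2})"
  by (simp_all add: hasse_edge_def)

lemma hasse_edge_image:
  "hasse_edge ` {..<9} = {({0}, {0,1}), ({1}, {0,1}), ({1}, {1,2}), ({2}, {1,2}), ({2}, {0,2}),
     ({0}, {0,2}), ({0,1}, {0,1,2}), ({1,2}, {0,1,2}), ({0,2}, {0,1,2})}"
  "hasse_edge ` {..<6} = {({0}, {0,1}), ({1}, {0,1}), ({1}, {1,2}), ({2}, {1,2}), ({2}, {0,2}),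
     ({0}, {0,2})}"
  by (simp_all add: lessThan_nine lessThan_six hasse_edge_def)

lemma hasse_Delta2: "hasse Delta2 = hasse_edge ` {..<9}"
proof
  have "\<forall>\<sigma>\<in>Delta2. \<forall>\<tau>\<in>Delta2. \<sigma> \<subset> \<tau> \<and> card \<tau> = card \<sigma> + 1 \<longrightarrow> (\<sigma>, \<tau>) \<in> hasse_edge ` {..<9}"
    unfolding Delta2_eq hasse_edge_image by (simp add: insert_eq_iff_Diff insert_Diff_if psubset_eq)
  then show "hasse Delta2 \<subseteq> hasse_edge ` {..<9}"
    unfolding hasse_def by blast
  show "hasse_edge ` {..<9} \<subseteq> hasse Delta2"
    unfolding hasse_def Delta2_eq hasse_edge_image by (simp add: insert_eq_iff_Diff insert_Diff_if psubset_eq)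
qed

lemma hasse_bdDelta2: "hasse bdDelta2 = hasse_edge ` {..<6}"
proof
  have "\<forall>\<sigma>\<in>bdDelta2. \<forall>\<tau>\<in>bdDelta2. \<sigma> \<subset> \<tau> \<and> card \<tau> = card \<sigma> + 1 \<longrightarrow> (\<sigma>, \<tau>) \<in> hasse_edge ` {..<6}"
    unfolding bdDelta2_eq hasse_edge_image by (simp add: insert_eq_iff_Diff insert_Diff_if psubset_eq)
  then show "hasse bdDelta2 \<subseteq> hasse_edge ` {..<6}"
    unfolding hasse_def by blast
  show "hasse_edge ` {..<6} \<subseteq> hasse bdDelta2"
    unfolding hasse_def bdDelta2_eq hasse_edge_image by (simp add: insert_eq_iff_Diff insert_Diff_if psubset_eq)
qed

lemma inj_on_hasse_edge: "inj_on hasse_edge {..<9}"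
  unfolding inj_on_def lessThan_nine by (simp add: hasse_edge_def insert_eq_iff_Diff insert_Diff_if)

lemma hasse_edge_mem_image_iff: "i < 9 \<Longrightarrow> A \<subseteq> {..<9} \<Longrightarrow> hasse_edge i \<in> hasse_edge ` A \<longleftrightarrow> i \<in> A"
  using inj_on_image_mem_iff[OF inj_on_hasse_edge] by blast

text \<open>Index sets of the simplices of the two Morse complexes. The vertices \<open>0, \<dots>, 5\<close> with
  all non-consecutive pairs as edges form the complement of the hexagon, i.e.\ the prism graph.\<close>

definition morse_indices_bdDelta2 :: "nat set set" where
  "morse_indices_bdDelta2 = {{0}, {1}, {2}, {3}, {4}, {5},
     {0,2}, {0,3}, {0,4}, {1,3}, {1,4}, {1,5}, {2,4}, {2,5}, {3,5}}"

definition morse_indices_Delta2 :: "nat set set" where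
  "morse_indices_Delta2 = morse_indices_bdDelta2 \<union>
     {{6}, {2,6}, {3,6}, {4,6}, {5,6}, {2,4,6}, {2,5,6}, {3,5,6},
      {7}, {0,7}, {1,7}, {4,7}, {5,7}, {0,4,7}, {1,4,7}, {1,5,7},
      {8}, {0,8}, {1,8}, {2,8}, {3,8}, {0,2,8}, {0,3,8}, {1,3,8}}"

text \<open>Certificates of acyclicity: values on \<open>{0}, {1}, {2}, {0,1}, {1,2}, {0,2}, {0,1,2}\<close> of a
  function increasing along unmatched and decreasing along matched edges of the Hasse diagram.\<close>

definition Delta2_potential :: "int list \<Rightarrow> nat set \<Rightarrow> int" where
  "Delta2_potential vs \<sigma> = vs ! (if \<sigma> = {0} then 0 else if \<sigma> = {1} then 1 else if \<sigma> = {2} then 2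
     else if \<sigma> = {0,1} then 3 else if \<sigma> = {1,2} then 4 else if \<sigma> = {0,2} then 5 else 6)"

definition potential_certifies :: "nat set \<Rightarrow> int list \<Rightarrow> bool" where
  "potential_certifies A vs \<longleftrightarrow> A \<noteq> {} \<and> A \<subseteq> {..<9} \<and> is_matching (hasse_edge ` A) \<and>
     (\<forall>i \<in> {..<9} - A. Delta2_potential vs (fst (hasse_edge i)) < Delta2_potential vs (snd (hasse_edge i))) \<and>
     (\<forall>i \<in> A. Delta2_potential vs (snd (hasse_edge i)) < Delta2_potential vs (fst (hasse_edge i)))"

lemma morse_Delta2_if_potential_certifies:
  assumes "potential_certifies A vs"
  shows "hasse_edge ` A \<in> morse_complex Delta2"
proof -
  let ?f = "Delta2_potential vs"
  have A: "A \<noteq> {}" "A \<subseteq> {..<9}" and matching: "is_matching (hasse_edge ` A)"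
    and up: "\<forall>i \<in> {..<9} - A. ?f (fst (hasse_edge i)) < ?f (snd (hasse_edge i))"
    and down: "\<forall>i \<in> A. ?f (snd (hasse_edge i)) < ?f (fst (hasse_edge i))"
    using assms unfolding potential_certifies_def by auto
  have up': "\<forall>(\<sigma>, \<tau>) \<in> hasse Delta2 - hasse_edge ` A. ?f \<sigma> < ?f \<tau>"
  proof clarify
    fix \<sigma> \<tau>
    assume "(\<sigma>, \<tau>) \<in> hasse Delta2" "(\<sigma>, \<tau>) \<notin> hasse_edge ` A"
    then obtain i where "i \<in> {..<9} - A" "(\<sigma>, \<tau>) = hasse_edge i"
      unfolding hasse_Delta2 by blast
    then show "?f \<sigma> < ?f \<tau>"
      using up by (metis fst_conv snd_conv)
  qed
  have down': "\<forall>(\<sigma>, \<tau>) \<in> hasse_edge ` A. ?f \<tau> < ?f \<sigma>"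
  proof clarify
    fix \<sigma> \<tau> i
    assume "i \<in> A" "(\<sigma>, \<tau>) = hasse_edge i"
    then show "?f \<tau> < ?f \<sigma>"
      using down by (metis fst_conv snd_conv)
  qed
  have "hasse_edge ` A \<subseteq> hasse Delta2"
    using A(2) unfolding hasse_Delta2 by blast
  then have "acyclic_matching Delta2 (hasse_edge ` A)"
    using matching up' down' by (rule acyclic_matching_by_potential)
  then show ?thesis
    using A(1) unfolding morse_complex_def by blast
qed

definition Delta2_facet_potentials :: "(nat set \<times> int list) list" where
  "Delta2_facet_potentials =
     [({2,4,6}, [0,4,2,5,3,1,4]), ({2,5,6}, [2,2,0,3,1,1,2]), ({3,5,6}, [4,0,2,5,1,3,4]),
      ({0,4,7}, [2,0,4,1,5,3,4]), ({1,4,7}, [0,2,2,1,3,1,2]), ({1,5,7}, [2,4,0,3,5,1,4]),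
      ({0,2,8}, [4,2,0,3,1,5,4]), ({0,3,8}, [2,0,2,1,1,3,2]), ({1,3,8}, [0,2,4,1,3,5,4])]"

lemma Delta2_facet_potentials_certify:
  "\<forall>(F, vs) \<in> set Delta2_facet_potentials. potential_certifies F vs"
  unfolding Delta2_facet_potentials_def potential_certifies_def lessThan_nine
  by (simp add: hasse_edge_def Delta2_potential_def is_matching_def insert_eq_iff_Diff insert_Diff_if)

lemma morse_indices_Delta2_below_facet:
  "\<forall>A \<in> morse_indices_Delta2. \<exists>(F, vs) \<in> set Delta2_facet_potentials. A \<subseteq> F"
  unfolding morse_indices_Delta2_def morse_indices_bdDelta2_def Delta2_facet_potentials_def
  by simp

lemma empty_notin_morse_indices_Delta2: "{} \<notin> morse_indices_Delta2"
  unfolding morse_indices_Delta2_def morse_indices_bdDelta2_def by simp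

lemma morse_indices_Delta2_subset_morse_complex:
  "(`) hasse_edge ` morse_indices_Delta2 \<subseteq> morse_complex Delta2"
proof clarify
  fix A
  assume A: "A \<in> morse_indices_Delta2"
  then obtain F vs where facet: "(F, vs) \<in> set Delta2_facet_potentials" and "A \<subseteq> F"
    using morse_indices_Delta2_below_facet by blast
  have "potential_certifies F vs"
    using bspec[OF Delta2_facet_potentials_certify facet] by (rule case_prodD)
  then have "hasse_edge ` F \<in> morse_complex Delta2"
    by (rule morse_Delta2_if_potential_certifies)
  then show "hasse_edge ` A \<in> morse_complex Delta2"
    by (rule morse_complex_downward_closed)
      (use \<open>A \<subseteq> F\<close> A empty_notin_morse_indices_Delta2 in auto)
qed

definition hasse_conflicts :: "(nat \<times> nat) set" where
  "hasse_conflicts = {(0,1), (1,2), (2,3), (3,4), (4,5), (5,0), (6,0), (6,1), (7,2), (7,3),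
     (8,4), (8,5), (6,7), (6,8), (7,8)}"

lemma hasse_conflicts_share_simplex:
  "\<forall>(i, j) \<in> hasse_conflicts. hasse_edge i \<noteq> hasse_edge j \<and>
     {fst (hasse_edge i), snd (hasse_edge i)} \<inter> {fst (hasse_edge j), snd (hasse_edge j)} \<noteq> {}"
  unfolding hasse_conflicts_def by (simp add: hasse_edge_def insert_eq_iff_Diff insert_Diff_if)

lemma matching_avoids_conflicts:
  assumes "is_matching (hasse_edge ` A)" "(i, j) \<in> hasse_conflicts" "i \<in> A"
  shows "j \<notin> A"
  using bspec[OF hasse_conflicts_share_simplex assms(2)] assms(1,3)
  unfolding is_matching_def by blast

lemma modified_hasse_hexagon_edges:
  assumes hexagon: "hasse_edge ` {..<6} \<subseteq> hasse K" and A: "A \<subseteq> {..<9}"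
  shows "i < 6 \<Longrightarrow> i \<notin> A \<Longrightarrow> hasse_edge i \<in> modified_hasse K (hasse_edge ` A)"
    and "i \<in> A \<Longrightarrow> prod.swap (hasse_edge i) \<in> modified_hasse K (hasse_edge ` A)"
proof -
  show "hasse_edge i \<in> modified_hasse K (hasse_edge ` A)" if "i < 6" "i \<notin> A"
    using that hexagon hasse_edge_mem_image_iff[OF _ A, of i] unfolding modified_hasse_def by auto
  show "prod.swap (hasse_edge i) \<in> modified_hasse K (hasse_edge ` A)" if "i \<in> A"
  proof -
    have "hasse_edge i \<in> hasse_edge ` A"
      using that by (rule imageI)
    then show ?thesis
      unfolding modified_hasse_def by (simp add: prod.swap_def)
  qed
qed

lemma hexagon_cycles:
  assumes acyclic: "acyclic_matching K (hasse_edge ` A)" and hexagon: "hasse_edge ` {..<6} \<subseteq> hasse K"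
    and A: "A \<subseteq> {..<9}"
  shows "\<not> {0,2,4} \<subseteq> A" "\<not> {1,3,5} \<subseteq> A"
proof -
  let ?R = "modified_hasse K (hasse_edge ` A)"
  have matching: "is_matching (hasse_edge ` A)" and "acyclic ?R"
    using acyclic unfolding acyclic_matching_iff by auto
  then have no_loop: "({0::nat}, {0}) \<notin> ?R\<^sup>+"
    unfolding acyclic_def by blast
  note edge = modified_hasse_hexagon_edges[OF hexagon A]
  have conflict: "\<not> (0 \<in> A \<and> 1 \<in> A)" "\<not> (2 \<in> A \<and> 3 \<in> A)" "\<not> (4 \<in> A \<and> 5 \<in> A)"
    using matching_avoids_conflicts[OF matching] by (auto simp: hasse_conflicts_def)
  show "\<not> {0,2,4} \<subseteq> A"
  proof
    assume even: "{0,2,4} \<subseteq> A"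
    then have "hasse_edge 5 \<in> ?R" "prod.swap (hasse_edge 4) \<in> ?R" "hasse_edge 3 \<in> ?R"
      "prod.swap (hasse_edge 2) \<in> ?R" "hasse_edge 1 \<in> ?R" "prod.swap (hasse_edge 0) \<in> ?R"
      using edge conflict by auto
    then have "({0}, {0}) \<in> ?R\<^sup>+"
      unfolding hasse_edge_simps swap_simp by (meson r_into_trancl trancl_into_trancl2)
    then show False
      using no_loop by blast
  qed
  show "\<not> {1,3,5} \<subseteq> A"
  proof
    assume odd: "{1,3,5} \<subseteq> A"
    then have "hasse_edge 0 \<in> ?R" "prod.swap (hasse_edge 1) \<in> ?R" "hasse_edge 2 \<in> ?R"
      "prod.swap (hasse_edge 3) \<in> ?R" "hasse_edge 4 \<in> ?R" "prod.swap (hasse_edge 5) \<in> ?R"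
      using edge conflict by auto
    then have "({0}, {0}) \<in> ?R\<^sup>+"
      unfolding hasse_edge_simps swap_simp by (meson r_into_trancl trancl_into_trancl2)
    then show False
      using no_loop by blast
  qed
qed

lemma morse_indices_Delta2_complete:
  assumes "A \<subseteq> {..<9}" "A \<noteq> {}" "\<forall>(i, j) \<in> hasse_conflicts. \<not> (i \<in> A \<and> j \<in> A)"
    "\<not> {0,2,4} \<subseteq> A" "\<not> {1,3,5} \<subseteq> A"
  shows "A \<in> morse_indices_Delta2"
proof -
  have "\<forall>A \<in> Pow {..<9}. if A \<noteq> {} \<and> (\<forall>(i, j) \<in> hasse_conflicts. \<not> (i \<in> A \<and> j \<in> A)) \<and>
      \<not> {0,2,4} \<subseteq> A \<and> \<not> {1,3,5} \<subseteq> A then A \<in> morse_indices_Delta2 else True"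
    unfolding lessThan_nine ball_Pow_insert Pow_empty hasse_conflicts_def
      morse_indices_Delta2_def morse_indices_bdDelta2_def
    by (simp add: insert_commute)
  then have "if A \<noteq> {} \<and> (\<forall>(i, j) \<in> hasse_conflicts. \<not> (i \<in> A \<and> j \<in> A)) \<and>
      \<not> {0,2,4} \<subseteq> A \<and> \<not> {1,3,5} \<subseteq> A then A \<in> morse_indices_Delta2 else True"
    using assms(1) by blast
  then show ?thesis
    using assms(2-) by (auto split: if_splits)
qed

lemma morse_complex_subset_morse_indices:
  assumes hexagon: "hasse_edge ` {..<6} \<subseteq> hasse K" and small: "hasse K \<subseteq> hasse_edge ` {..<9}"
    and W: "W \<in> morse_complex K"
  obtains A where "A \<in> morse_indices_Delta2" "A \<subseteq> {..<9}" "W = hasse_edge ` A"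
proof -
  define A where "A = {i \<in> {..<9}. hasse_edge i \<in> W}"
  have acyclic: "acyclic_matching K W" and "W \<noteq> {}"
    using W unfolding morse_complex_def by auto
  moreover have "W \<subseteq> hasse K"
    using acyclic unfolding acyclic_matching_def by blast
  ultimately have A: "A \<subseteq> {..<9}" "W = hasse_edge ` A" "A \<noteq> {}"
    using small unfolding A_def by auto
  have acyclic_A: "acyclic_matching K (hasse_edge ` A)"
    using acyclic A(2) by simp
  then have "is_matching (hasse_edge ` A)"
    unfolding acyclic_matching_def by blast
  then have "\<forall>(i, j) \<in> hasse_conflicts. \<not> (i \<in> A \<and> j \<in> A)"
    using matching_avoids_conflicts by blast
  then have "A \<in> morse_indices_Delta2"
    using morse_indices_Delta2_complete[OF A(1,3)] hexagon_cycles[OF acyclic_A hexagon A(1)] by blast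
  then show thesis
    using that A by blast
qed

theorem morse_complex_Delta2: "morse_complex Delta2 = (`) hasse_edge ` morse_indices_Delta2"
proof
  show "morse_complex Delta2 \<subseteq> (`) hasse_edge ` morse_indices_Delta2"
  proof
    fix W
    assume W: "W \<in> morse_complex Delta2"
    have hexagon: "hasse_edge ` {..<6} \<subseteq> hasse Delta2"
      unfolding hasse_Delta2 by auto
    have small: "hasse Delta2 \<subseteq> hasse_edge ` {..<9}"
      unfolding hasse_Delta2 by (rule order_refl)
    obtain A where "A \<in> morse_indices_Delta2" "W = hasse_edge ` A"
      using morse_complex_subset_morse_indices[OF hexagon small W] by blast
    then show "W \<in> (`) hasse_edge ` morse_indices_Delta2"
      by blast
  qed
qed (rule morse_indices_Delta2_subset_morse_complex)

lemma morse_indices_bdDelta2_eq: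
  "morse_indices_bdDelta2 = {A \<in> morse_indices_Delta2. A \<subseteq> {..<6}}"
proof (intro set_eqI iffI)
  fix A
  assume A: "A \<in> morse_indices_bdDelta2"
  have "\<forall>A \<in> morse_indices_bdDelta2. A \<subseteq> {..<6}"
    unfolding morse_indices_bdDelta2_def lessThan_six by simp
  moreover have "morse_indices_bdDelta2 \<subseteq> morse_indices_Delta2"
    unfolding morse_indices_Delta2_def by (rule Un_upper1)
  ultimately show "A \<in> {A \<in> morse_indices_Delta2. A \<subseteq> {..<6}}"
    using A by blast
next
  fix A
  assume "A \<in> {A \<in> morse_indices_Delta2. A \<subseteq> {..<6}}"
  then have A: "A \<in> morse_indices_Delta2" "A \<subseteq> {..<6}"
    by auto
  have "\<forall>A \<in> morse_indices_Delta2. if A \<subseteq> {..<6} then A \<in> morse_indices_bdDelta2 else True"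
    unfolding morse_indices_Delta2_def morse_indices_bdDelta2_def lessThan_six by simp
  then have "if A \<subseteq> {..<6} then A \<in> morse_indices_bdDelta2 else True"
    using A(1) by (rule bspec)
  then show "A \<in> morse_indices_bdDelta2"
    using A(2) by simp
qed

lemma bdDelta2_subset_Delta2: "bdDelta2 \<subseteq> Delta2"
  unfolding Delta2_def bdDelta2_def by auto

theorem morse_complex_bdDelta2: "morse_complex bdDelta2 = (`) hasse_edge ` morse_indices_bdDelta2"
proof
  show "morse_complex bdDelta2 \<subseteq> (`) hasse_edge ` morse_indices_bdDelta2"
  proof
    fix W
    assume W: "W \<in> morse_complex bdDelta2"
    have hexagon: "hasse_edge ` {..<6} \<subseteq> hasse bdDelta2" and small: "hasse bdDelta2 \<subseteq> hasse_edge ` {..<9}"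
      unfolding hasse_bdDelta2 by auto
    obtain A where A: "A \<in> morse_indices_Delta2" "A \<subseteq> {..<9}" "W = hasse_edge ` A"
      using morse_complex_subset_morse_indices[OF hexagon small W] by blast
    have "hasse_edge ` A \<subseteq> hasse_edge ` {..<6}"
      using W A(3) unfolding morse_complex_def acyclic_matching_def hasse_bdDelta2 by blast
    then have "A \<subseteq> {..<6}"
      using inj_on_image_subset_iff[OF inj_on_hasse_edge A(2)] by auto
    then show "W \<in> (`) hasse_edge ` morse_indices_bdDelta2"
      unfolding morse_indices_bdDelta2_eq using A(1,3) by blast
  qed
  show "(`) hasse_edge ` morse_indices_bdDelta2 \<subseteq> morse_complex bdDelta2"
  proof clarify
    fix A
    assume "A \<in> morse_indices_bdDelta2"
    then have A: "A \<in> morse_indices_Delta2" "A \<subseteq> {..<6}"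
      unfolding morse_indices_bdDelta2_eq by auto
    then have "hasse_edge ` A \<in> morse_complex Delta2"
      using morse_indices_Delta2_subset_morse_complex by blast
    moreover have "hasse_edge ` A \<subseteq> hasse bdDelta2"
      using A(2) unfolding hasse_bdDelta2 by blast
    ultimately show "hasse_edge ` A \<in> morse_complex bdDelta2"
      unfolding morse_complex_def using acyclic_matching_mono[OF _ bdDelta2_subset_Delta2] by blast
  qed
qed

definition Delta2_collapse_moves :: "nat elementary_move list" where
  "Delta2_collapse_moves =
     [Collapse {4,6} 2, Collapse {2,6} 5, Collapse {5,6} 3, Collapse {6} 3,
      Collapse {0,7} 4, Collapse {4,7} 1, Collapse {1,7} 5, Collapse {7} 5,
      Collapse {2,8} 0, Collapse {0,8} 3, Collapse {3,8} 1, Collapse {8} 1]"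

lemma formal_deformation_morse_indices:
  "formal_deformation Delta2_collapse_moves morse_indices_Delta2 morse_indices_bdDelta2"
  unfolding Delta2_collapse_moves_def morse_indices_Delta2_def morse_indices_bdDelta2_def
  by (simp add: free_face_def insert_eq_iff_Diff insert_Diff_if)

text \<open>Edge slides (an expansion across a triangle, then the collapse of another of its edges) and
  subdivisions, ending in the triangles \<open>{0,2,4}\<close>, \<open>{0,3,5}\<close>, \<open>{0,6,1}\<close>, \<open>{0,7,8}\<close>.\<close>

definition prism_to_bouquet_moves :: "nat elementary_move list" where
  "prism_to_bouquet_moves =
     [Expand {0,5} 2, Collapse {2,5} 0, Expand {0,1} 4, Collapse {1,4} 0,
      Expand {6} 5, Expand {1,6} 5, Collapse {1,5} 6, Expand {0,6} 5, Collapse {5,6} 0,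
      Expand {7} 3, Expand {1,7} 3, Collapse {1,3} 7, Expand {0,7} 3, Collapse {3,7} 0,
      Expand {8} 0, Expand {1,8} 0, Collapse {0,1} 8, Expand {7,8} 1, Collapse {1,8} 7,
      Expand {0,1} 7, Collapse {1,7} 0]"

definition bouquet_P :: "nat \<Rightarrow> nat" where
  "bouquet_P k = [2, 3, 6, 7] ! (k - 1)"

definition bouquet_Q :: "nat \<Rightarrow> nat" where
  "bouquet_Q k = [4, 5, 1, 8] ! (k - 1)"

lemma atLeastAtMost_one_four: "{1..4::nat} = {1, 2, 3, 4}"
  by auto

lemma formal_deformation_prism_bouquet:
  "formal_deformation prism_to_bouquet_moves morse_indices_bdDelta2
     (triangle_bouquet 4 bouquet_P bouquet_Q)"
  unfolding prism_to_bouquet_moves_def morse_indices_bdDelta2_def triangle_bouquet_def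
    atLeastAtMost_one_four bouquet_P_def bouquet_Q_def
  by (simp add: free_face_def insert_eq_iff_Diff insert_Diff_if)

interpretation prism_bouquet: triangle_bouquet_labels 4 bouquet_P bouquet_Q
proof
  fix k j :: nat
  assume k: "k \<in> {1..4}"
  then show "bouquet_P k \<noteq> 0 \<and> bouquet_Q k \<noteq> 0 \<and> bouquet_P k \<noteq> bouquet_Q k"
    unfolding atLeastAtMost_one_four bouquet_P_def bouquet_Q_def by auto
  assume "j \<in> {1..4}" "k \<noteq> j"
  with k show "bouquet_P k \<noteq> bouquet_P j \<and> bouquet_Q k \<noteq> bouquet_Q j \<and> bouquet_P k \<noteq> bouquet_Q j"
    unfolding atLeastAtMost_one_four bouquet_P_def bouquet_Q_def by auto
qed simp

lemma realization_prism_homotopy_equivalent_wedge: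
  "realization morse_indices_bdDelta2 homotopy_equivalent_space wedge_circles 4"
  using homotopy_equivalent_if_formal_deformation[OF formal_deformation_prism_bouquet]
    homeomorphic_imp_homotopy_equivalent_space[OF prism_bouquet.realization_triangle_bouquet_homeomorphic]
  by (rule homotopy_eqv_trans)

lemma Union_morse_indices:
  "\<Union>morse_indices_bdDelta2 = {..<6}" "\<Union>morse_indices_Delta2 = {..<9}"
  unfolding morse_indices_Delta2_def morse_indices_bdDelta2_def lessThan_six lessThan_nine
  by (simp_all add: insert_commute)

text \<open>Even indices go to one triangle of the prism and odd ones to the other; the hexagon
  edges \<open>i\<close> and \<open>i + 3\<close> go to the ends of a vertical edge.\<close>

definition prism_vertex :: "nat \<Rightarrow> nat \<times> bool" where
  "prism_vertex i = [(0, False), (2, True), (1, False), (0, True), (2, False), (1, True)] ! i"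

lemma prism_graph_eq: "prism_graph = (`) prism_vertex ` morse_indices_bdDelta2"
proof -
  have "prism_graph = {{(0,False)}, {(0,True)}, {(1,False)}, {(1,True)}, {(2,False)}, {(2,True)},
      {(0,False),(1,False)}, {(0,False),(2,False)}, {(1,False),(2,False)},
      {(0,True),(1,True)}, {(0,True),(2,True)}, {(1,True),(2,True)},
      {(0,False),(0,True)}, {(1,False),(1,True)}, {(2,False),(2,True)}}"
  proof -
    have points: "{{(i, b)} | i b. i \<in> I} = (\<Union>i\<in>I. {{(i, False)}, {(i, True)}})" for I :: "nat set"
      by auto
    have triangles: "{{(i, b), (j, b)} | i j b. i \<in> I \<and> j \<in> I \<and> i \<noteq> j} =
        (\<Union>i\<in>I. \<Union>j\<in>I - {i}. {{(i, False), (j, False)}, {(i, True), (j, True)}})" for I :: "nat set"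
      by auto
    have rungs: "{{(i, False), (i, True)} | i. i \<in> I} = (\<lambda>i. {(i, False), (i, True)}) ` I" for I :: "nat set"
      by auto
    show ?thesis
      unfolding prism_graph_def points triangles rungs by (simp add: insert_eq_iff_Diff insert_Diff_if)
  qed
  also have "\<dots> = (`) prism_vertex ` morse_indices_bdDelta2"
    unfolding morse_indices_bdDelta2_def prism_vertex_def
    by (simp add: insert_eq_iff_Diff insert_Diff_if)
  finally show ?thesis .
qed

lemma Collect_mem_insert:
  "{x \<in> insert a A. P x} = (if P a then insert a {x \<in> A. P x} else {x \<in> A. P x})"
  by auto

lemma card_edges_morse_indices_bdDelta2: "card {A \<in> morse_indices_bdDelta2. card A = 2} = 9"
  unfolding morse_indices_bdDelta2_def Collect_mem_insert
  by (simp add: insert_eq_iff_Diff insert_Diff_if)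

lemma inj_on_hasse_edge_morse_indices:
  "inj_on hasse_edge (\<Union>morse_indices_Delta2)" "inj_on hasse_edge (\<Union>morse_indices_bdDelta2)"
  using inj_on_hasse_edge by (auto simp: Union_morse_indices intro: inj_on_subset)

lemma card_vertices_morse_complex_bdDelta2: "card (vertices (morse_complex bdDelta2)) = 6"
proof -
  have "vertices (morse_complex bdDelta2) = hasse_edge ` {..<6}"
    unfolding vertices_def morse_complex_bdDelta2 Union_morse_indices(1)[symmetric] by auto
  then show ?thesis
    using inj_on_hasse_edge_morse_indices(2) by (simp add: card_image Union_morse_indices)
qed

lemma card_edges_morse_complex_bdDelta2: "card {W \<in> morse_complex bdDelta2. card W = 2} = 9"
proof -
  let ?E = "{A \<in> morse_indices_bdDelta2. card A = 2}"
  have card_preserved: "card (hasse_edge ` A) = card A" if "A \<in> morse_indices_bdDelta2" for A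
    using that inj_on_hasse_edge_morse_indices(2) by (intro card_image) (auto intro: inj_on_subset)
  then have "{W \<in> morse_complex bdDelta2. card W = 2} = (`) hasse_edge ` ?E"
    unfolding morse_complex_bdDelta2 by auto
  moreover have "inj_on ((`) hasse_edge) ?E"
    using inj_on_image_Pow[OF inj_on_hasse_edge_morse_indices(2)] by (rule inj_on_subset) auto
  ultimately show ?thesis
    by (simp add: card_image card_edges_morse_indices_bdDelta2)
qed

lemma simp_iso_morse_complex_bdDelta2_prism_graph:
  "simp_iso (morse_complex bdDelta2) prism_graph"
proof -
  have "inj_on prism_vertex (\<Union>morse_indices_bdDelta2)"
    unfolding Union_morse_indices lessThan_six inj_on_def by (simp add: prism_vertex_def)
  then show ?thesis
    unfolding morse_complex_bdDelta2 prism_graph_eq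
    by (rule simp_iso_image_image[OF inj_on_hasse_edge_morse_indices(2)])
qed

lemma realization_morse_complex_bdDelta2_wedge:
  "realization (morse_complex bdDelta2) homotopy_equivalent_space wedge_circles 4"
  unfolding morse_complex_bdDelta2
  using homeomorphic_imp_homotopy_equivalent_space
      [OF realization_image_homeomorphic[OF inj_on_hasse_edge_morse_indices(2)]]
    realization_prism_homotopy_equivalent_wedge
  by (rule homotopy_eqv_trans)

lemma collapses_to_morse_complex: "collapses_to (morse_complex Delta2) (morse_complex bdDelta2)"
proof -
  have "collapses_to morse_indices_Delta2 morse_indices_bdDelta2"
    using formal_deformation_morse_indices
    by (rule collapses_to_if_formal_deformation) (simp add: Delta2_collapse_moves_def)
  then show ?thesis
    unfolding morse_complex_Delta2 morse_complex_bdDelta2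
    by (rule collapses_to_image[OF _ inj_on_hasse_edge_morse_indices(1)])
qed

lemma realization_morse_complex_Delta2_wedge:
  "realization (morse_complex Delta2) homotopy_equivalent_space wedge_circles 4"
proof -
  have "realization (morse_complex Delta2) homotopy_equivalent_space realization morse_indices_Delta2"
    unfolding morse_complex_Delta2
    by (intro homeomorphic_imp_homotopy_equivalent_space realization_image_homeomorphic
        inj_on_hasse_edge_morse_indices)
  also have "\<dots> homotopy_equivalent_space realization morse_indices_bdDelta2"
    by (rule homotopy_equivalent_if_formal_deformation[OF formal_deformation_morse_indices])
  also have "\<dots> homotopy_equivalent_space wedge_circles 4"
    by (rule realization_prism_homotopy_equivalent_wedge)
  finally show ?thesis .
qed

theorem mainTheorem9:
  shows "simp_iso (morse_complex bdDelta2) prism_graph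
       \<and> card (vertices (morse_complex bdDelta2)) = 6
       \<and> card {W \<in> morse_complex bdDelta2. card W = 2} = 9
       \<and> realization (morse_complex bdDelta2) homotopy_equivalent_space wedge_circles 4
       \<and> morse_complex bdDelta2 \<subseteq> morse_complex Delta2
       \<and> collapses_to (morse_complex Delta2) (morse_complex bdDelta2)
       \<and> realization (morse_complex Delta2) homotopy_equivalent_space wedge_circles 4"
proof -
  have "morse_complex bdDelta2 \<subseteq> morse_complex Delta2"
    unfolding morse_complex_Delta2 morse_complex_bdDelta2 morse_indices_bdDelta2_eq by blast
  then show ?thesis
    using simp_iso_morse_complex_bdDelta2_prism_graph card_vertices_morse_complex_bdDelta2
      card_edges_morse_complex_bdDelta2 realization_morse_complex_bdDelta2_wedge
      collapses_to_morse_complex realization_morse_complex_Delta2_wedge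
    by blast
qed

end
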